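(* Assume Assumption 1 and the fast charging regime $x_{\max}\ge R_{\max}$. Let $\beta=(\lambda_0,\alpha_0,\dots,\lambda_T,\alpha_T)$ and $\beta'=(\lambda_0',\alpha_0',\dots,\lambda_T',\alpha_T')$ be risk-aversion vectors with $\lambda_t\le\lambda_t'$ and $\alpha_t\le\alpha_t'$ for all $t$. Then for every $t\in\{0,1,\dots,T-1\}$, every $p\in\mathbb R$, and every $r\in(0,R_{\max})$ at which both derivatives exist, $\partial_r\tilde V_{t,T}(r,p\,|\,\beta)\ge\partial_r\tilde V_{t,T}(r,p\,|\,\beta')$; consequently $r_{t,T}(p\,|\,\beta)\le r_{t,T}(p\,|\,\beta')$ for every $t\in\{0,\dots,T-1\}$ and $p\in\mathbb R$.
   Context: Model (dynamic EV charging). Fix a horizon $T\in\{1,2,\dots\}$, a battery capacity $R_{\max}>0$, a maximal charge per period $x_{\max}>0$, an initial charge $R_0\in[0,R_{\max}]$, an access fee $c_f\in\mathbb R$, a reference price $p_{\mathrm{ref}}>0$, a constant $\gamma_h\ge 0$, a deterministic seasonality function $g:\mathbb R\to\mathbb R$, and price parameters $\kappa_Y>0$, $\mu_Y\in\mathbb R$, $\sigma_Y>0$, $\lambda_J\in(0,1)$, $\mu_J\in\mathbb R$, $\sigma_J>0$. Spot prices are $P_t=g(t)+Y_t$ with $Y_{t+1}=Y_te^{-\kappa_Y}+\mu_Y(1-e^{-\kappa_Y})+\xi_{t+1}+X_{t+1}J_{t+1}$, where $(\xi_t)$ are i.i.d. $\mathcal N\big(0,\sigma_Y^2(1-e^{-2\kappa_Y})/(2\kappa_Y)\big)$,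 $(X_t)$ are i.i.d. Bernoulli$(\lambda_J)$, $(J_t)$ are i.i.d. $\mathcal N(\mu_J,\sigma_J^2)$, all mutually independent. Define $\psi_{t+1}=g(t+1)-g(t)e^{-\kappa_Y}+\mu_Y(1-e^{-\kappa_Y})+\xi_{t+1}+X_{t+1}J_{t+1}$ and $\psi_{t+1,Y}=\psi_{t+1}-g(t+1)$ (so given $P_t=p$, $P_{t+1}$ has the law of $pe^{-\kappa_Y}+\psi_{t+1}$ and $Y_{t+1}$ that of $pe^{-\kappa_Y}+\psi_{t+1,Y}$). Let $\mathcal R=[0,R_{\max}]$, $\mathcal X(r)=[0,\min\{R_{\max}-r,x_{\max}\}]$, and shortage $h(r)=\min\{R_0+Tx_{\max},R_{\max}\}-r$. Let $\gamma_Y:\mathbb R\to(0,\infty)$ be a compensation function. Assumption 1: $\gamma_Y$ is positive, strictly increasing, and $L_{\gamma_Y}$-Lipschitz continuous with $L_{\gamma_Y}\le p_{\mathrm{ref}}^{-1}e^{2\kappa_Y}$. Risk measures. For $\alpha\in(0,1)$: $\mathrm{VaR}_\alpha(X)=\inf\{u:\mathbf P(X\le u)>\alpha\}$, $\mathrm{CVaR}_\alpha(X)=\inf_u\{u+(1-\alpha)^{-1}\mathbf E[(X-u)^+]\}$. For $\beta_t=(\lambda_t,\alpha_t)\in[0,1]\times(0,1)$, $\rho_{\beta_t}(X)=(1-\lambda_t)\mathbf E[X]+\lambda_t\mathrm{CVaR}_{\alpha_t}(X)$. A risk-aversion vector is $\beta=(\lambda_0,\alpha_0,\dots,\lambda_T,\alpha_T)$.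 Value functions. For $r\in\mathcal R$, $p\in\mathbb R$: $V_{T,T}(r,p\,|\,\beta)=\rho_{\beta_T}\big[\big(1+\gamma_h h(r)+\gamma_Y(pe^{-\kappa_Y}+\psi_{T+1,Y})\big)h(r)p_{\mathrm{ref}}\big]$, and for $t=T-1,\dots,0$: $\tilde V_{t,T}(r,p\,|\,\beta)=\rho_{\beta_t}\big[V_{t+1,T}(r,pe^{-\kappa_Y}+\psi_{t+1}\,|\,\beta)\big]$ (post-decision value function) and $V_{t,T}(r,p\,|\,\beta)=\min_{x\in\mathcal X(r)}\{xp-c_f+\tilde V_{t,T}(r+x,p\,|\,\beta)\}$. Threshold. For $t<T$, $r_{t,T}(p\,|\,\beta)$ is the smallest $\tilde r\in\mathcal R$ minimizing $\tilde r\,p+\tilde V_{t,T}(\tilde r,p\,|\,\beta)$ over $\tilde r\in\mathcal R$. *)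

theory Defs
  imports "HOL-Probability.Probability"
begin

record evm =
  Th    :: nat
  Rmax  :: real
  xmax  :: real
  R0    :: real
  cf    :: real
  pref  :: real
  gh    :: real
  gs    :: "real \<Rightarrow> real"    (* seasonality g *)
  kY    :: real
  muY   :: real
  sigY  :: real
  lamJ  :: real
  muJ   :: real
  sigJ  :: real
  gY    :: "real \<Rightarrow> real"    (* compensation function gamma_Y *)

definition valid_evm :: "evm \<Rightarrow> bool" where
  "valid_evm m \<longleftrightarrow> Th m \<ge> 1 \<and> Rmax m > 0 \<and> xmax m > 0 \<and> 0 \<le> R0 m \<and> R0 m \<le> Rmax m
     \<and> pref m > 0 \<and> gh m \<ge> 0 \<and> kY m > 0 \<and> sigY m > 0
     \<and> 0 < lamJ m \<and> lamJ m < 1 \<and> sigJ m > 0"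

definition assumption1 :: "evm \<Rightarrow> bool" where
  "assumption1 m \<longleftrightarrow> (\<forall>y. gY m y > 0) \<and> strict_mono (gY m)
     \<and> (\<exists>L. L \<le> exp (2 * kY m) / pref m \<and> (\<forall>x y. \<bar>gY m x - gY m y\<bar> \<le> L * \<bar>x - y\<bar>))"

definition sig_xi :: "evm \<Rightarrow> real" where
  "sig_xi m = sqrt (sigY m ^ 2 * (1 - exp (-2 * kY m)) / (2 * kY m))"

text \<open>Law of the random part xi + X*J, with xi ~ N(0, sig_xi^2), X ~ Bernoulli(lamJ),
  J ~ N(muJ, sigJ^2), all independent (product measure).\<close>
definition noise :: "evm \<Rightarrow> real measure" where
  "noise m = distr
     (density lborel (normal_density 0 (sig_xi m))
        \<Otimes>\<^sub>M (measure_pmf (bernoulli_pmf (lamJ m)) \<Otimes>\<^sub>M density lborel (normal_density (muJ m) (sigJ m))))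
     borel (\<lambda>(xi, x, j). xi + (if x then j else 0))"

text \<open>Deterministic part of psi_{t+1}: g(t+1) - g(t) e^{-kY} + muY (1 - e^{-kY}).\<close>
definition shift :: "evm \<Rightarrow> nat \<Rightarrow> real" where
  "shift m t = gs m (real t + 1) - gs m (real t) * exp (- kY m) + muY m * (1 - exp (- kY m))"

text \<open>Risk measures of the random variable f(Z), Z distributed according to M.\<close>
definition CVaR :: "real \<Rightarrow> real measure \<Rightarrow> (real \<Rightarrow> real) \<Rightarrow> real" where
  "CVaR \<alpha> M f = (INF u. u + (1 / (1 - \<alpha>)) * (\<integral>z. max (f z - u) 0 \<partial>M))"

definition rho :: "real \<times> real \<Rightarrow> real measure \<Rightarrow> (real \<Rightarrow> real) \<Rightarrow> real" where
  "rho b M f = (1 - fst b) * (\<integral>z. f z \<partial>M) + fst b * CVaR (snd b) M f"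

text \<open>Risk-aversion vector: beta t = (lambda_t, alpha_t).\<close>
definition valid_beta :: "evm \<Rightarrow> (nat \<Rightarrow> real \<times> real) \<Rightarrow> bool" where
  "valid_beta m \<beta> \<longleftrightarrow> (\<forall>t \<le> Th m. 0 \<le> fst (\<beta> t) \<and> fst (\<beta> t) \<le> 1 \<and> 0 < snd (\<beta> t) \<and> snd (\<beta> t) < 1)"

definition shortage :: "evm \<Rightarrow> real \<Rightarrow> real" where
  "shortage m r = min (R0 m + real (Th m) * xmax m) (Rmax m) - r"

definition Xset :: "evm \<Rightarrow> real \<Rightarrow> real set" where
  "Xset m r = {0 .. min (Rmax m - r) (xmax m)}"

text \<open>Vb m beta n r p = V_{T-n,T}(r,p | beta) for n \<le> T.\<close>
primrec Vb :: "evm \<Rightarrow> (nat \<Rightarrow> real \<times> real) \<Rightarrow> nat \<Rightarrow> real \<Rightarrow> real \<Rightarrow> real" where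
  "Vb m \<beta> 0 r p = rho (\<beta> (Th m)) (noise m)
     (\<lambda>z. (1 + gh m * shortage m r
            + gY m (p * exp (- kY m) + (shift m (Th m) - gs m (real (Th m) + 1)) + z))
          * shortage m r * pref m)"
| "Vb m \<beta> (Suc n) r p =
     (INF x \<in> Xset m r. x * p - cf m
        + rho (\<beta> (Th m - Suc n)) (noise m)
            (\<lambda>z. Vb m \<beta> n (r + x) (p * exp (- kY m) + shift m (Th m - Suc n) + z)))"

definition V :: "evm \<Rightarrow> (nat \<Rightarrow> real \<times> real) \<Rightarrow> nat \<Rightarrow> real \<Rightarrow> real \<Rightarrow> real" where
  "V m \<beta> t r p = Vb m \<beta> (Th m - t) r p"

text \<open>Post-decision value function tilde V_{t,T}(r,p | beta), t < T.\<close>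
definition Vt :: "evm \<Rightarrow> (nat \<Rightarrow> real \<times> real) \<Rightarrow> nat \<Rightarrow> real \<Rightarrow> real \<Rightarrow> real" where
  "Vt m \<beta> t r p = rho (\<beta> t) (noise m) (\<lambda>z. V m \<beta> (t + 1) r (p * exp (- kY m) + shift m t + z))"

lemma V_Suc: "t < Th m \<Longrightarrow> V m \<beta> t r p = (INF x \<in> Xset m r. x * p - cf m + Vt m \<beta> t (r + x) p)"
proof -
  assume "t < Th m"
  then obtain n where n: "Th m - t = Suc n" "Th m - (t+1) = n" by (metis Suc_diff_Suc diff_Suc_1 Suc_eq_plus1 diff_diff_left)
  hence "Th m - Suc n = t" using \<open>t < Th m\<close> by simp
  thus ?thesis using n by (simp add: V_def Vt_def)
qed

definition thresh :: "evm \<Rightarrow> (nat \<Rightarrow> real \<times> real) \<Rightarrow> nat \<Rightarrow> real \<Rightarrow> real" where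
  "thresh m \<beta> t p = (THE r. r \<in> {0 .. Rmax m}
      \<and> (\<forall>r' \<in> {0 .. Rmax m}. r * p + Vt m \<beta> t r p \<le> r' * p + Vt m \<beta> t r' p)
      \<and> (\<forall>r' \<in> {0 .. Rmax m}. (\<forall>r'' \<in> {0 .. Rmax m}. r' * p + Vt m \<beta> t r' p \<le> r'' * p + Vt m \<beta> t r'' p) \<longrightarrow> r \<le> r'))"

end

theory Submission
  imports Defs
begin

text \<open>By backward induction, every value function \<open>V\<close> and post-decision value function \<open>Vt\<close>
  is convex and Lipschitz in the charge level \<open>r\<close>, nondecreasing in the price \<open>p\<close>, and has
  increments \<open>f r\<^sub>1 p - f r\<^sub>2 p\<close> (\<open>r\<^sub>1 \<le> r\<^sub>2\<close>) that are nondecreasing in \<open>p\<close>. On nondecreasing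
  functions of the noise the mean-CVaR measure is additive, so an increment of \<open>Vt\<close> is the
  mean-CVaR of an increment of the next value function; since mean-CVaR grows with \<open>\<lambda>\<close> and \<open>\<alpha>\<close>,
  the increments under \<open>\<beta>\<close> stay below those under \<open>\<beta>'\<close>. In the fast charging regime the Bellman
  minimisation preserves all these properties, because by convexity its increments are infima of
  increments. Comparing increments at \<open>r\<close> gives the derivative inequality, and comparing the
  objectives \<open>r p + Vt\<close> orders their least minimisers, the thresholds.\<close>

section \<open>The noise law\<close>

lemma distr_pair_snd:
  assumes "prob_space M" "sigma_finite_measure N"
  shows "distr (M \<Otimes>\<^sub>M N) N snd = N"
proof (intro measure_eqI)
  interpret M: prob_space M by fact
  interpret N: sigma_finite_measure N by fact
  fix A assume A: "A \<in> sets (distr (M \<Otimes>\<^sub>M N) N snd)"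
  from A have "emeasure (distr (M \<Otimes>\<^sub>M N) N snd) A = emeasure (M \<Otimes>\<^sub>M N) (space M \<times> A)"
    by (auto simp add: emeasure_distr space_pair_measure dest: sets.sets_into_space
        intro!: arg_cong2[where f=emeasure])
  with A show "emeasure (distr (M \<Otimes>\<^sub>M N) N snd) A = emeasure N A"
    by (simp add: N.emeasure_pair_measure_Times M.emeasure_space_1)
qed simp

lemma integrable_pair_fst:
  fixes f :: "'a \<Rightarrow> real"
  assumes "prob_space N" "integrable M f"
  shows "integrable (M \<Otimes>\<^sub>M N) (\<lambda>w. f (fst w))"
proof -
  have "integrable (distr (M \<Otimes>\<^sub>M N) M fst) f"
    using prob_space.distr_pair_fst[OF assms(1), of M] assms(2) by simp
  thus ?thesis by (subst (asm) integrable_distr_eq) (use assms(2) in auto)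
qed

lemma integrable_pair_snd:
  fixes f :: "'b \<Rightarrow> real"
  assumes "prob_space M" "prob_space N" "integrable N f"
  shows "integrable (M \<Otimes>\<^sub>M N) (\<lambda>w. f (snd w))"
proof -
  have "integrable (distr (M \<Otimes>\<^sub>M N) N snd) f"
    using distr_pair_snd[OF assms(1) prob_space_imp_sigma_finite[OF assms(2)]] assms(3) by simp
  thus ?thesis by (subst (asm) integrable_distr_eq) (use assms(3) in auto)
qed

lemma sig_xi_pos: "valid_evm m \<Longrightarrow> sig_xi m > 0"
  unfolding sig_xi_def valid_evm_def by (auto intro!: divide_pos_pos mult_pos_pos)

lemma integrable_normal_density_id:
  assumes "0 < \<sigma>"
  shows "integrable (density lborel (normal_density \<mu> \<sigma>)) (\<lambda>x. x)"
proof -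
  have "integrable lborel (\<lambda>x. normal_density \<mu> \<sigma> x * x)"
    by (rule integrable_normal_moment_nz_1) (use assms in auto)
  thus ?thesis by (subst integrable_density) (auto simp: normal_density_nonneg)
qed

lemma noise_real_distribution:
  assumes "valid_evm m"
  shows "real_distribution (noise m)" and "integrable (noise m) (\<lambda>z. z)"
proof -
  define A where "A = density lborel (normal_density 0 (sig_xi m))"
  define B where "B = measure_pmf (bernoulli_pmf (lamJ m))"
  define C where "C = density lborel (normal_density (muJ m) (sigJ m))"
  define g where "g = (\<lambda>(xi::real, x::bool, j::real). xi + (if x then j else 0))"
  have \<sigma>: "sig_xi m > 0" "sigJ m > 0" using sig_xi_pos assms by (auto simp: valid_evm_def)
  have pA: "prob_space A" unfolding A_def by (rule prob_space_normal_density[OF \<sigma>(1)])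
  have pC: "prob_space C" unfolding C_def by (rule prob_space_normal_density[OF \<sigma>(2)])
  have pB: "prob_space B" unfolding B_def by (rule prob_space_measure_pmf)
  have pBC: "prob_space (B \<Otimes>\<^sub>M C)" by (rule prob_space_pair[OF pB pC])
  have pP: "prob_space (A \<Otimes>\<^sub>M (B \<Otimes>\<^sub>M C))" by (rule prob_space_pair[OF pA pBC])
  have g: "g \<in> measurable (A \<Otimes>\<^sub>M (B \<Otimes>\<^sub>M C)) borel"
    unfolding g_def A_def B_def C_def by measurable
  have noise: "noise m = distr (A \<Otimes>\<^sub>M (B \<Otimes>\<^sub>M C)) borel g"
    unfolding noise_def A_def B_def C_def g_def by simp
  show "real_distribution (noise m)"
    unfolding noise real_distribution_def real_distribution_axioms_def
    using prob_space.prob_space_distr[OF pP g] by simp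
  have "integrable A abs" "integrable C abs"
    unfolding A_def C_def using integrable_normal_density_id \<sigma> by auto
  hence "integrable (A \<Otimes>\<^sub>M (B \<Otimes>\<^sub>M C)) (\<lambda>w. \<bar>fst w\<bar>)"
    and "integrable (A \<Otimes>\<^sub>M (B \<Otimes>\<^sub>M C)) (\<lambda>w. \<bar>snd (snd w)\<bar>)"
    using integrable_pair_fst[OF pBC] integrable_pair_snd[OF pA pBC integrable_pair_snd[OF pB pC]] by auto
  hence "integrable (A \<Otimes>\<^sub>M (B \<Otimes>\<^sub>M C)) g"
    by (rule Bochner_Integration.integrable_bound[OF Bochner_Integration.integrable_add g])
      (auto simp: g_def split: prod.splits)
  thus "integrable (noise m) (\<lambda>z. z)"
    unfolding noise by (subst integrable_distr_eq[OF g]) auto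
qed

section \<open>Mean-CVaR of nondecreasing functions\<close>

definition valid_risk_level :: "real \<times> real \<Rightarrow> bool" where
  "valid_risk_level b \<longleftrightarrow> 0 \<le> fst b \<and> fst b \<le> 1 \<and> 0 < snd b \<and> snd b < 1"

locale integrable_real_distribution = real_distribution N for N :: "real measure" +
  assumes integrable_id: "integrable N (\<lambda>z. z)"
begin

lemma integrable_max_diff_const:
  fixes w :: "real \<Rightarrow> real"
  assumes "integrable N w" shows "integrable N (\<lambda>z. max (w z - u) 0)"
proof -
  have "integrable N (\<lambda>z. w z - u)"
    by (rule Bochner_Integration.integrable_diff[OF assms integrable_const])
  thus ?thesis by (rule Bochner_Integration.integrable_max[OF _ integrable_zero])
qed

lemma expectation_le_CVaR_objective:
  fixes w :: "real \<Rightarrow> real"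
  assumes w: "integrable N w" and \<alpha>: "0 < \<alpha>" "\<alpha> < 1"
  shows "(\<integral>z. w z \<partial>N) \<le> u + (1 / (1 - \<alpha>)) * (\<integral>z. max (w z - u) 0 \<partial>N)"
proof -
  have "(\<integral>z. w z \<partial>N) - u = (\<integral>z. w z - u \<partial>N)"
    using w prob_space by simp
  also have "\<dots> \<le> (\<integral>z. max (w z - u) 0 \<partial>N)"
    by (rule integral_mono) (use w integrable_max_diff_const[OF w] in auto)
  also have "\<dots> \<le> (1 / (1 - \<alpha>)) * (\<integral>z. max (w z - u) 0 \<partial>N)"
  proof -
    have "1 \<le> 1 / (1 - \<alpha>)" using \<alpha> by simp
    moreover have "0 \<le> (\<integral>z. max (w z - u) 0 \<partial>N)" by (rule Bochner_Integration.integral_nonneg) simp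
    ultimately show ?thesis using mult_right_mono by fastforce
  qed
  finally show ?thesis by simp
qed

lemma bdd_below_CVaR_objective:
  fixes w :: "real \<Rightarrow> real"
  assumes "integrable N w" "0 < \<alpha>" "\<alpha> < 1"
  shows "bdd_below (range (\<lambda>u. u + (1 / (1 - \<alpha>)) * (\<integral>z. max (w z - u) 0 \<partial>N)))"
  by (rule bdd_belowI2[where m="\<integral>z. w z \<partial>N"]) (rule expectation_le_CVaR_objective[OF assms])

lemma CVaR_ge_expectation:
  fixes w :: "real \<Rightarrow> real"
  assumes "integrable N w" "0 < \<alpha>" "\<alpha> < 1"
  shows "(\<integral>z. w z \<partial>N) \<le> CVaR \<alpha> N w"
  unfolding CVaR_def by (rule cINF_greatest) (use expectation_le_CVaR_objective[OF assms] in auto)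

lemma CVaR_mono_level:
  fixes w :: "real \<Rightarrow> real"
  assumes w: "integrable N w" and \<alpha>: "0 < \<alpha>" "\<alpha> \<le> \<alpha>'" "\<alpha>' < 1"
  shows "CVaR \<alpha> N w \<le> CVaR \<alpha>' N w"
  unfolding CVaR_def
proof (rule cINF_mono)
  show "bdd_below (range (\<lambda>u. u + (1 / (1 - \<alpha>)) * (\<integral>z. max (w z - u) 0 \<partial>N)))"
    by (rule bdd_below_CVaR_objective) (use assms in auto)
  fix u
  have "1 / (1 - \<alpha>) * (\<integral>z. max (w z - u) 0 \<partial>N) \<le> 1 / (1 - \<alpha>') * (\<integral>z. max (w z - u) 0 \<partial>N)"
    using \<alpha> by (intro mult_right_mono frac_le) auto
  then show "\<exists>v\<in>UNIV. v + 1 / (1 - \<alpha>) * (\<integral>z. max (w z - v) 0 \<partial>N)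
      \<le> u + 1 / (1 - \<alpha>') * (\<integral>z. max (w z - u) 0 \<partial>N)"
    by (intro bexI[of _ u]) auto
qed auto

lemma rho_mono_risk_aversion:
  fixes w :: "real \<Rightarrow> real"
  assumes w: "integrable N w" and b: "valid_risk_level b" "valid_risk_level b'"
    and le: "fst b \<le> fst b'" "snd b \<le> snd b'"
  shows "rho b N w \<le> rho b' N w"
proof -
  let ?E = "\<integral>z. w z \<partial>N"
  have E: "?E \<le> CVaR (snd b) N w"
    using CVaR_ge_expectation[OF w] b by (auto simp: valid_risk_level_def)
  have CVaR: "CVaR (snd b) N w \<le> CVaR (snd b') N w"
    using CVaR_mono_level[OF w] b le by (auto simp: valid_risk_level_def)
  have "rho b N w = ?E + fst b * (CVaR (snd b) N w - ?E)" unfolding rho_def by algebra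
  also have "\<dots> \<le> ?E + fst b' * (CVaR (snd b) N w - ?E)"
    using le E by (auto intro: mult_right_mono)
  also have "\<dots> \<le> ?E + fst b' * (CVaR (snd b') N w - ?E)"
    using CVaR b by (auto simp: valid_risk_level_def intro: mult_left_mono)
  also have "\<dots> = rho b' N w" unfolding rho_def by algebra
  finally show ?thesis .
qed

lemma exists_quantile:
  assumes \<alpha>: "0 < \<alpha>" "\<alpha> < 1"
  shows "\<exists>q. measure N {..<q} \<le> \<alpha> \<and> \<alpha> \<le> cdf N q"
proof -
  define S where "S = {t. \<alpha> \<le> cdf N t}"
  have "\<forall>\<^sub>F t in at_top. cdf N t > \<alpha>"
    using cdf_lim_at_top_prob \<alpha> by (auto intro: order_tendstoD)
  then obtain t0 where "\<alpha> < cdf N t0" by (auto simp: eventually_at_top_linorder)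
  hence S_ne: "S \<noteq> {}" unfolding S_def by (metis (mono_tags) empty_Collect_eq less_imp_le)
  have "\<forall>\<^sub>F t in at_bot. cdf N t < \<alpha>"
    using cdf_lim_at_bot \<alpha> by (auto intro: order_tendstoD)
  then obtain t1 where t1: "\<And>t. t \<le> t1 \<Longrightarrow> cdf N t < \<alpha>" by (auto simp: eventually_at_bot_linorder)
  have S_bdd: "bdd_below S"
    unfolding S_def by (rule bdd_belowI[of _ t1]) (use t1 in \<open>fastforce simp: not_less[symmetric]\<close>)
  define q where "q = Inf S"
  have below: "cdf N t < \<alpha>" if "t < q" for t
  proof (rule ccontr)
    assume "\<not> cdf N t < \<alpha>" hence "t \<in> S" by (simp add: S_def)
    hence "q \<le> t" unfolding q_def using S_bdd by (rule cInf_lower)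
    with that show False by simp
  qed
  have above: "\<alpha> \<le> cdf N t" if q_t: "q < t" for t
  proof -
    obtain s where "s \<in> S" "s < t" using cInf_lessD[OF S_ne, of t] q_t unfolding q_def by blast
    thus ?thesis unfolding S_def using cdf_nondecreasing[of s t] by auto
  qed
  have "(cdf N \<longlongrightarrow> cdf N q) (at_right q)"
    using cdf_is_right_cont[of q] by (simp add: continuous_within)
  hence "\<alpha> \<le> cdf N q"
    by (rule tendsto_lowerbound)
      (auto simp: eventually_at_right_field above trivial_limit_at_right_real intro: exI[of _ "q + 1"])
  moreover have "measure N {..<q} \<le> \<alpha>"
    using cdf_at_left[of q]
    by (rule tendsto_upperbound)
      (auto simp: eventually_at_left_field below less_imp_le trivial_limit_at_left_real
        intro: exI[of _ "q - 1"])
  ultimately show ?thesis by blast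
qed

lemma quantile_split_exists:
  assumes \<alpha>: "0 < \<alpha>" "\<alpha> < 1"
  shows "\<exists>q \<theta>. 0 \<le> \<theta> \<and> \<theta> \<le> measure N {q} \<and> measure N {q<..} + \<theta> = 1 - \<alpha>"
proof -
  obtain q where q: "measure N {..<q} \<le> \<alpha>" "\<alpha> \<le> cdf N q" using exists_quantile[OF \<alpha>] by blast
  have "{..q} \<union> {q<..} = UNIV" "{..q} \<inter> {q<..} = {}" by auto
  hence "measure N {..q} + measure N {q<..} = 1"
    using finite_measure_Union[of "{..q}" "{q<..}"] prob_space by auto
  moreover have "measure N {..<q} + measure N {q} = measure N {..q}"
  proof -
    have "insert q {..<q} = {..q}" by auto
    thus ?thesis using finite_measure_Union[of "{..<q}" "{q}"] by simp
  qed
  ultimately show ?thesis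
    using q by (intro exI[of _ q] exI[of _ "cdf N q - \<alpha>"]) (auto simp: cdf_def2)
qed

definition quantile_split :: "real \<Rightarrow> real \<times> real" where
  "quantile_split \<alpha> = (SOME (q, \<theta>). 0 \<le> \<theta> \<and> \<theta> \<le> measure N {q} \<and> measure N {q<..} + \<theta> = 1 - \<alpha>)"

lemma quantile_split:
  assumes "0 < \<alpha>" "\<alpha> < 1" "quantile_split \<alpha> = (q, \<theta>)"
  shows "0 \<le> \<theta>" "\<theta> \<le> measure N {q}" "measure N {q<..} + \<theta> = 1 - \<alpha>"
proof -
  have "\<exists>x. case x of (q, \<theta>) \<Rightarrow> 0 \<le> \<theta> \<and> \<theta> \<le> measure N {q} \<and> measure N {q<..} + \<theta> = 1 - \<alpha>"
    using quantile_split_exists[OF assms(1,2)] by auto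
  from someI_ex[OF this] assms(3) show "0 \<le> \<theta>" "\<theta> \<le> measure N {q}" "measure N {q<..} + \<theta> = 1 - \<alpha>"
    unfolding quantile_split_def by auto
qed

lemma integrable_mult_indicator_greaterThan:
  fixes u :: "real \<Rightarrow> real"
  shows "integrable N u \<Longrightarrow> integrable N (\<lambda>z. u z * indicator {q<..} z)"
  using integrable_real_mult_indicator[of "{q<..}" N u] by simp

lemma tail_value_le_CVaR_objective:
  fixes u :: "real \<Rightarrow> real"
  assumes \<alpha>: "\<alpha> < 1" and \<theta>: "0 \<le> \<theta>" "\<theta> \<le> measure N {q}" "measure N {q<..} + \<theta> = 1 - \<alpha>"
    and u: "integrable N u"
  shows "((\<integral>z. u z * indicator {q<..} z \<partial>N) + \<theta> * u q) / (1 - \<alpha>)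
    \<le> w + (1 / (1 - \<alpha>)) * (\<integral>z. max (u z - w) 0 \<partial>N)"
proof -
  define I where "I = (\<integral>z. u z * indicator {q<..} z \<partial>N)"
  define h where "h = (\<lambda>z. u z * indicator {q<..} z - w * indicator {q<..} z
    + max (u q - w) 0 * indicator {q} z)"
  have iu: "integrable N (\<lambda>z. u z * indicator {q<..} z)"
    using u by (rule integrable_mult_indicator_greaterThan)
  have "I - w * measure N {q<..} + max (u q - w) 0 * measure N {q} = (\<integral>z. h z \<partial>N)"
    unfolding h_def I_def
    by (subst Bochner_Integration.integral_add Bochner_Integration.integral_diff,
        (intro Bochner_Integration.integrable_add Bochner_Integration.integrable_diff iu
          integrable_real_mult_indicator integrable_const; simp)+)+
      (simp add: mult.commute)
  also have "\<dots> \<le> (\<integral>z. max (u z - w) 0 \<partial>N)"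
  proof (rule integral_mono)
    show "integrable N h"
      unfolding h_def
      by (intro Bochner_Integration.integrable_add Bochner_Integration.integrable_diff iu
          integrable_real_mult_indicator integrable_const) auto
    show "h z \<le> max (u z - w) 0" for z
      by (cases "q < z"; cases "z = q") (auto simp: h_def indicator_def)
  qed (rule integrable_max_diff_const[OF u])
  finally have "I - w * measure N {q<..} + max (u q - w) 0 * measure N {q}
    \<le> (\<integral>z. max (u z - w) 0 \<partial>N)" .
  moreover have "\<theta> * (u q - w) \<le> max (u q - w) 0 * measure N {q}"
  proof -
    have "\<theta> * (u q - w) \<le> \<theta> * max (u q - w) 0" using \<theta> by (intro mult_left_mono) auto
    also have "\<dots> \<le> measure N {q} * max (u q - w) 0" using \<theta> by (intro mult_right_mono) auto
    finally show ?thesis by (simp add: mult.commute)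
  qed
  ultimately have "I - w * measure N {q<..} + \<theta> * (u q - w) \<le> (\<integral>z. max (u z - w) 0 \<partial>N)"
    by linarith
  hence "I + \<theta> * u q \<le> w * (measure N {q<..} + \<theta>) + (\<integral>z. max (u z - w) 0 \<partial>N)"
    by (simp add: algebra_simps)
  hence "I + \<theta> * u q \<le> w * (1 - \<alpha>) + (\<integral>z. max (u z - w) 0 \<partial>N)"
    unfolding \<theta>(3) .
  hence "(I + \<theta> * u q) / (1 - \<alpha>) \<le> (w * (1 - \<alpha>) + (\<integral>z. max (u z - w) 0 \<partial>N)) / (1 - \<alpha>)"
    using \<alpha> by (intro divide_right_mono) auto
  also have "\<dots> = w + (1 / (1 - \<alpha>)) * (\<integral>z. max (u z - w) 0 \<partial>N)"
    using \<alpha> by (simp add: field_simps)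
  finally show ?thesis unfolding I_def .
qed

lemma CVaR_objective_at_quantile:
  fixes u :: "real \<Rightarrow> real"
  assumes \<alpha>: "\<alpha> < 1" and \<theta>: "measure N {q<..} + \<theta> = 1 - \<alpha>"
    and u: "mono u" "integrable N u"
  shows "u q + (1 / (1 - \<alpha>)) * (\<integral>z. max (u z - u q) 0 \<partial>N)
    = ((\<integral>z. u z * indicator {q<..} z \<partial>N) + \<theta> * u q) / (1 - \<alpha>)"
proof -
  have eq: "(\<lambda>z. max (u z - u q) 0) = (\<lambda>z. u z * indicator {q<..} z - u q * indicator {q<..} z)"
    using u(1) by (intro ext) (auto simp: indicator_def mono_def)
  have iu: "integrable N (\<lambda>z. u z * indicator {q<..} z)"
    using u(2) by (rule integrable_mult_indicator_greaterThan)
  have "measure N {q<..} = 1 - \<alpha> - \<theta>" using \<theta> by simp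
  hence "(\<integral>z. max (u z - u q) 0 \<partial>N) = (\<integral>z. u z * indicator {q<..} z \<partial>N) - u q * (1 - \<alpha> - \<theta>)"
    unfolding eq
    by (simp add: Bochner_Integration.integral_diff[OF iu integrable_real_mult_indicator] mult.commute)
  thus ?thesis using \<alpha> by (simp add: field_simps)
qed

text \<open>For nondecreasing \<open>u\<close>, the infimum defining \<open>CVaR\<close> is attained at \<open>u q\<close>, where \<open>q\<close> is an
  \<open>\<alpha>\<close>-quantile; the atom at \<open>q\<close> is split so that exactly mass \<open>1 - \<alpha>\<close> lies in the tail.\<close>

lemma CVaR_mono_eq:
  fixes u :: "real \<Rightarrow> real"
  assumes \<alpha>: "0 < \<alpha>" "\<alpha> < 1" and qs: "quantile_split \<alpha> = (q, \<theta>)"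
    and u: "mono u" "integrable N u"
  shows "CVaR \<alpha> N u = ((\<integral>z. u z * indicator {q<..} z \<partial>N) + \<theta> * u q) / (1 - \<alpha>)"
  unfolding CVaR_def
proof (rule cInf_eq_minimum)
  note \<theta> = quantile_split[OF \<alpha> qs]
  show "((\<integral>z. u z * indicator {q<..} z \<partial>N) + \<theta> * u q) / (1 - \<alpha>)
    \<in> range (\<lambda>w. w + 1 / (1 - \<alpha>) * (\<integral>z. max (u z - w) 0 \<partial>N))"
    using CVaR_objective_at_quantile[OF \<alpha>(2) \<theta>(3) u] by (intro range_eqI[of _ _ "u q"]) simp
qed (use tail_value_le_CVaR_objective[OF \<alpha>(2) quantile_split[OF \<alpha> qs] u(2)] in auto)

text \<open>For nondecreasing \<open>u\<close>, \<open>rho b N u\<close> equals this functional, which is linear in \<open>u\<close>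
  (comonotonic additivity); this is what lets \<open>rho\<close> pass through the increments \<open>f r\<^sub>1 - f r\<^sub>2\<close>
  of value functions.\<close>

definition rho_spectral :: "real \<times> real \<Rightarrow> (real \<Rightarrow> real) \<Rightarrow> real" where
  "rho_spectral b u = (case quantile_split (snd b) of (q, \<theta>) \<Rightarrow>
     (1 - fst b) * (\<integral>z. u z \<partial>N)
     + fst b * (((\<integral>z. u z * indicator {q<..} z \<partial>N) + \<theta> * u q) / (1 - snd b)))"

lemma rho_eq_rho_spectral:
  fixes u :: "real \<Rightarrow> real"
  assumes "valid_risk_level b" "mono u" "integrable N u"
  shows "rho b N u = rho_spectral b u"
proof -
  obtain q \<theta> where qs: "quantile_split (snd b) = (q, \<theta>)" by fastforce
  have "0 < snd b" "snd b < 1" using assms(1) by (auto simp: valid_risk_level_def)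
  thus ?thesis
    unfolding rho_def rho_spectral_def qs using CVaR_mono_eq[OF _ _ qs assms(2,3)] by simp
qed

lemma rho_spectral_add:
  fixes u v :: "real \<Rightarrow> real"
  assumes "integrable N u" "integrable N v"
  shows "rho_spectral b (\<lambda>z. u z + v z) = rho_spectral b u + rho_spectral b v"
proof -
  obtain q \<theta> where qs: "quantile_split (snd b) = (q, \<theta>)" by fastforce
  have eq: "(\<lambda>z. (u z + v z) * indicator {q<..} z) = (\<lambda>z. u z * indicator {q<..} z + v z * indicator {q<..} z)"
    by (simp add: distrib_right)
  have "integrable N (\<lambda>z. u z * indicator {q<..} z)" "integrable N (\<lambda>z. v z * indicator {q<..} z)"
    using assms by (auto intro: integrable_mult_indicator_greaterThan)
  thus ?thesis
    unfolding rho_spectral_def qs prod.case eq using assms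
    by (simp add: Bochner_Integration.integral_add add_divide_distrib algebra_simps)
qed

lemma rho_spectral_cmult: "rho_spectral b (\<lambda>z. c * u z) = c * rho_spectral b u"
proof -
  obtain q \<theta> where qs: "quantile_split (snd b) = (q, \<theta>)" by fastforce
  have "(\<lambda>z. c * u z * indicator {q<..} z) = (\<lambda>z. c * (u z * indicator {q<..} z))"
    by (simp add: mult.assoc)
  then show ?thesis
    unfolding rho_spectral_def qs prod.case by (simp add: algebra_simps add_divide_distrib del: mult.assoc)
qed

lemma rho_spectral_diff:
  fixes u v :: "real \<Rightarrow> real"
  assumes "integrable N u" "integrable N v"
  shows "rho_spectral b (\<lambda>z. u z - v z) = rho_spectral b u - rho_spectral b v"
  using rho_spectral_add[OF assms(1) integrable_mult_right[OF assms(2), of "-1"]]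
    rho_spectral_cmult[of b "-1" v] by simp

lemma rho_spectral_const:
  assumes "valid_risk_level b"
  shows "rho_spectral b (\<lambda>z. c) = c"
proof -
  obtain q \<theta> where qs: "quantile_split (snd b) = (q, \<theta>)" by fastforce
  have \<alpha>: "0 < snd b" "snd b < 1" using assms by (auto simp: valid_risk_level_def)
  have "(\<integral>z. c * indicator {q<..} z \<partial>N) + \<theta> * c = c * (measure N {q<..} + \<theta>)"
    by (simp add: algebra_simps)
  also have "\<dots> = c * (1 - snd b)" using quantile_split(3)[OF \<alpha> qs] by simp
  finally have tail: "((\<integral>z. c * indicator {q<..} z \<partial>N) + \<theta> * c) / (1 - snd b) = c"
    using \<alpha> by simp
  have "rho_spectral b (\<lambda>z. c) = (1 - fst b) * c + fst b * c"
    unfolding rho_spectral_def qs prod.case tail using prob_space by simp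
  thus ?thesis by (simp add: algebra_simps)
qed

lemma rho_spectral_mono:
  fixes u v :: "real \<Rightarrow> real"
  assumes b: "valid_risk_level b" and uv: "integrable N u" "integrable N v" "\<And>z. u z \<le> v z"
  shows "rho_spectral b u \<le> rho_spectral b v"
proof -
  obtain q \<theta> where qs: "quantile_split (snd b) = (q, \<theta>)" by fastforce
  have \<alpha>: "0 < snd b" "snd b < 1" "0 \<le> fst b" "fst b \<le> 1" using b by (auto simp: valid_risk_level_def)
  have "(\<integral>z. u z \<partial>N) \<le> (\<integral>z. v z \<partial>N)" by (rule integral_mono) (use uv in auto)
  moreover have "(\<integral>z. u z * indicator {q<..} z \<partial>N) \<le> (\<integral>z. v z * indicator {q<..} z \<partial>N)"
    by (rule integral_mono)
      (use uv integrable_mult_indicator_greaterThan in \<open>auto simp: indicator_def\<close>)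
  ultimately show ?thesis
    unfolding rho_spectral_def qs prod.case using \<alpha> uv(3) quantile_split(1)[OF \<alpha>(1,2) qs]
    by (intro add_mono mult_left_mono divide_right_mono) auto
qed

lemma abs_tail_value_le:
  fixes u h :: "real \<Rightarrow> real"
  assumes \<alpha>: "\<alpha> < 1" and \<theta>: "0 \<le> \<theta>" "\<theta> \<le> 1" and uh: "integrable N u" "integrable N h" "\<And>z. \<bar>u z\<bar> \<le> h z"
  shows "\<bar>((\<integral>z. u z * indicator {q<..} z \<partial>N) + \<theta> * u q) / (1 - \<alpha>)\<bar> \<le> ((\<integral>z. h z \<partial>N) + h q) / (1 - \<alpha>)"
proof -
  have "\<bar>u z * indicator {q<..} z\<bar> \<le> h z" for z
    using uh(3)[of z] by (auto split: split_indicator)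
  hence "\<bar>\<integral>z. u z * indicator {q<..} z \<partial>N\<bar> \<le> (\<integral>z. h z \<partial>N)"
    by (rule integral_abs_bound_integral[OF integrable_mult_indicator_greaterThan[OF uh(1)] uh(2)])
  moreover have "\<bar>\<theta> * u q\<bar> \<le> h q"
    using \<theta> uh(3)[of q] mult_left_le_one_le[of "\<bar>u q\<bar>" \<theta>] by (simp add: abs_mult)
  ultimately have "\<bar>(\<integral>z. u z * indicator {q<..} z \<partial>N) + \<theta> * u q\<bar> \<le> (\<integral>z. h z \<partial>N) + h q"
    by (smt (verit) abs_triangle_ineq)
  thus ?thesis using \<alpha> by (simp add: abs_div divide_right_mono)
qed

lemma abs_rho_spectral_le:
  fixes u h :: "real \<Rightarrow> real"
  assumes b: "valid_risk_level b" and uh: "integrable N u" "integrable N h" "\<And>z. \<bar>u z\<bar> \<le> h z"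
  shows "\<bar>rho_spectral b u\<bar> \<le> ((\<integral>z. h z \<partial>N) + h (fst (quantile_split (snd b)))) / (1 - snd b)"
proof -
  obtain q \<theta> where qs: "quantile_split (snd b) = (q, \<theta>)" by fastforce
  have \<alpha>: "0 < snd b" "snd b < 1" "0 \<le> fst b" "fst b \<le> 1" using b by (auto simp: valid_risk_level_def)
  have "measure N {q} \<le> 1" by (rule prob_le_1)
  hence \<theta>: "0 \<le> \<theta>" "\<theta> \<le> 1" using quantile_split(1,2)[OF \<alpha>(1,2) qs] by linarith+
  have h_nonneg: "0 \<le> h z" for z using uh(3)[of z] by linarith
  define Y where "Y = ((\<integral>z. h z \<partial>N) + h q) / (1 - snd b)"
  have "(\<integral>z. h z \<partial>N) * (1 - snd b) \<le> (\<integral>z. h z \<partial>N)"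
    using \<alpha> h_nonneg by (intro mult_left_le) auto
  hence Eh: "(\<integral>z. h z \<partial>N) \<le> Y" unfolding Y_def using \<alpha> h_nonneg[of q] by (simp add: le_divide_eq)
  have Eu: "\<bar>\<integral>z. u z \<partial>N\<bar> \<le> (\<integral>z. h z \<partial>N)" by (rule integral_abs_bound_integral[OF uh])
  define T where "T = ((\<integral>z. u z * indicator {q<..} z \<partial>N) + \<theta> * u q) / (1 - snd b)"
  have "\<bar>T\<bar> \<le> Y" unfolding T_def Y_def by (rule abs_tail_value_le[OF \<alpha>(2) \<theta> uh])
  have "rho_spectral b u = (1 - fst b) * (\<integral>z. u z \<partial>N) + fst b * T"
    unfolding rho_spectral_def qs T_def by simp
  hence "\<bar>rho_spectral b u\<bar> \<le> \<bar>(1 - fst b) * (\<integral>z. u z \<partial>N)\<bar> + \<bar>fst b * T\<bar>"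
    by (simp only: abs_triangle_ineq)
  also have "\<dots> = (1 - fst b) * \<bar>\<integral>z. u z \<partial>N\<bar> + fst b * \<bar>T\<bar>"
    using \<alpha> by (simp add: abs_mult)
  also have "\<dots> \<le> (1 - fst b) * Y + fst b * Y"
    using \<alpha> Eu Eh \<open>\<bar>T\<bar> \<le> Y\<close> by (intro add_mono mult_left_mono) auto
  also have "\<dots> = Y" by (simp add: algebra_simps)
  finally show ?thesis unfolding Y_def using qs by simp
qed

end

section \<open>Infima, convexity and least minimisers on the real line\<close>

lemma abs_shift_growth_le:
  fixes g :: "real \<Rightarrow> real"
  assumes "\<And>y. \<bar>g y\<bar> \<le> a + k * \<bar>y\<bar>" "0 \<le> k"
  shows "\<bar>g (c + z)\<bar> \<le> (a + k * \<bar>c\<bar>) + k * \<bar>z\<bar>"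
  using assms(1)[of "c + z"] mult_left_mono[OF abs_triangle_ineq[of c z] assms(2)]
  by (simp add: algebra_simps)

lemma bdd_below_image_of_abs_le:
  fixes h :: "'a \<Rightarrow> real"
  assumes "\<And>s. s \<in> S \<Longrightarrow> \<bar>h s\<bar> \<le> B"
  shows "bdd_below (h ` S)"
  by (rule bdd_belowI2[of _ "-B"]) (use assms in force)

lemma abs_cINF_le:
  fixes h :: "'a \<Rightarrow> real"
  assumes "S \<noteq> {}" "\<And>s. s \<in> S \<Longrightarrow> \<bar>h s\<bar> \<le> B"
  shows "\<bar>INF s\<in>S. h s\<bar> \<le> B"
proof -
  obtain s where s: "s \<in> S" using assms(1) by blast
  have "- B \<le> (INF s\<in>S. h s)" by (rule cINF_greatest[OF assms(1)]) (use assms(2) in force)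
  moreover have "(INF s\<in>S. h s) \<le> h s" by (rule cINF_lower[OF bdd_below_image_of_abs_le[OF assms(2)] s])
  ultimately show ?thesis using assms(2)[OF s] by linarith
qed

lemma cINF_mono_of_abs_le:
  fixes h\<^sub>1 h\<^sub>2 :: "'a \<Rightarrow> real"
  assumes "S \<noteq> {}" "\<And>s. s \<in> S \<Longrightarrow> \<bar>h\<^sub>1 s\<bar> \<le> B" "\<And>s. s \<in> S \<Longrightarrow> h\<^sub>1 s \<le> h\<^sub>2 s"
  shows "(INF s\<in>S. h\<^sub>1 s) \<le> (INF s\<in>S. h\<^sub>2 s)"
proof (rule cINF_mono[OF assms(1) bdd_below_image_of_abs_le[OF assms(2)]])
  fix m assume "m \<in> S" thus "\<exists>n\<in>S. h\<^sub>1 n \<le> h\<^sub>2 m" using assms(3)[of m] by blast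
qed

lemma cINF_add_const:
  fixes h :: "'a \<Rightarrow> real"
  assumes "S \<noteq> {}" "bdd_below (h ` S)"
  shows "(INF s\<in>S. h s + k) = (INF s\<in>S. h s) + k"
proof (rule antisym)
  obtain m where m: "\<And>s. s \<in> S \<Longrightarrow> m \<le> h s" using assms(2) by (auto simp: bdd_below_def)
  have bdd: "bdd_below ((\<lambda>s. h s + k) ` S)" by (rule bdd_belowI2[of _ "m + k"]) (use m in auto)
  have "(INF s\<in>S. h s + k) - k \<le> (INF s\<in>S. h s)"
  proof (rule cINF_greatest[OF assms(1)])
    fix s assume "s \<in> S"
    from cINF_lower[OF bdd this] show "(INF s\<in>S. h s + k) - k \<le> h s" by simp
  qed
  thus "(INF s\<in>S. h s + k) \<le> (INF s\<in>S. h s) + k" by simp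
  show "(INF s\<in>S. h s) + k \<le> (INF s\<in>S. h s + k)"
    by (rule cINF_greatest[OF assms(1)]) (use cINF_lower[OF assms(2)] in auto)
qed

lemma convex_on_le_left_of_descent:
  fixes \<phi> :: "real \<Rightarrow> real"
  assumes \<phi>: "convex_on S \<phi>" and st: "s \<in> S" "t \<in> S" and x: "s \<le> x" "x < t" and drop: "\<phi> t < \<phi> x"
  shows "\<phi> x \<le> \<phi> s"
proof (cases "s = x")
  case False
  define l where "l = (x - s) / (t - s)"
  have l: "0 < l" "l < 1" using False x unfolding l_def by (auto simp: field_simps)
  have "l * (t - s) = x - s" using False x unfolding l_def by simp
  hence "x = (1 - l) * s + l * t" by (simp add: algebra_simps)
  hence "\<phi> x \<le> (1 - l) * \<phi> s + l * \<phi> t"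
    using convex_onD[OF \<phi>, of l s t] st l by simp
  moreover have "l * \<phi> t < l * \<phi> x" using l drop by simp
  ultimately have "(1 - l) * \<phi> x < (1 - l) * \<phi> s" by (simp add: algebra_simps)
  thus ?thesis using l by simp
qed simp

lemma DERIV_nonpos_of_nonincreasing_right:
  fixes f :: "real \<Rightarrow> real"
  assumes "r < b" and nonincr: "\<And>h. 0 < h \<Longrightarrow> r + h < b \<Longrightarrow> f (r + h) \<le> f r"
    and D: "(f has_real_derivative D) (at r)"
  shows "D \<le> 0"
proof (rule ccontr)
  assume "\<not> D \<le> 0"
  then obtain d where d: "0 < d" "\<And>h. 0 < h \<Longrightarrow> h < d \<Longrightarrow> f r < f (r + h)"
    using DERIV_pos_inc_right[OF D] by auto
  define h where "h = min (d / 2) ((b - r) / 2)"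
  have "0 < h" "h < d" "r + h < b" using d \<open>r < b\<close> unfolding h_def by (auto simp: min_def field_simps)
  thus False using d(2) nonincr by fastforce
qed

definition is_least_minimizer :: "real set \<Rightarrow> (real \<Rightarrow> real) \<Rightarrow> real \<Rightarrow> bool" where
  "is_least_minimizer S \<phi> r \<longleftrightarrow>
     r \<in> S \<and> (\<forall>r'\<in>S. \<phi> r \<le> \<phi> r') \<and> (\<forall>r'\<in>S. (\<forall>r''\<in>S. \<phi> r' \<le> \<phi> r'') \<longrightarrow> r \<le> r')"

lemma least_minimizer_exists:
  fixes \<phi> :: "real \<Rightarrow> real"
  assumes S: "compact S" "S \<noteq> {}" and \<phi>: "continuous_on S \<phi>"
  shows "\<exists>r. is_least_minimizer S \<phi> r"
proof -
  obtain x\<^sub>0 where x\<^sub>0: "x\<^sub>0 \<in> S" "\<And>y. y \<in> S \<Longrightarrow> \<phi> x\<^sub>0 \<le> \<phi> y"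
    using continuous_attains_inf[OF S \<phi>] by blast
  define M where "M = S \<inter> \<phi> -` {..\<phi> x\<^sub>0}"
  have M: "M = {r \<in> S. \<forall>r'\<in>S. \<phi> r \<le> \<phi> r'}"
    unfolding M_def using x\<^sub>0 by (auto intro: order_trans)
  have "closed M"
    unfolding M_def by (rule continuous_closed_preimage[OF \<phi> compact_imp_closed[OF S(1)]]) auto
  moreover have "M \<noteq> {}" "bdd_below M"
    using x\<^sub>0 compact_imp_bounded[OF S(1)] bounded_imp_bdd_below unfolding M_def by auto
  ultimately have "Inf M \<in> M" by (rule closed_contains_Inf[rotated 2])
  thus ?thesis
    using cInf_lower[OF _ \<open>bdd_below M\<close>] unfolding is_least_minimizer_def M by blast
qed

lemma least_minimizer_unique:
  "is_least_minimizer S \<phi> r \<Longrightarrow> is_least_minimizer S \<phi> r' \<Longrightarrow> r = r'"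
  unfolding is_least_minimizer_def by (meson antisym)

lemma least_minimizer_The:
  fixes \<phi> :: "real \<Rightarrow> real"
  assumes "compact S" "S \<noteq> {}" "continuous_on S \<phi>"
  shows "is_least_minimizer S \<phi> (THE r. is_least_minimizer S \<phi> r)"
  using least_minimizer_exists[OF assms] least_minimizer_unique by (metis theI)

lemma least_minimizer_mono:
  assumes r: "is_least_minimizer S \<phi> r" and r': "is_least_minimizer S \<psi> r'"
    and incr: "\<And>x y. x \<in> S \<Longrightarrow> y \<in> S \<Longrightarrow> x \<le> y \<Longrightarrow> \<phi> x - \<phi> y \<le> \<psi> x - \<psi> y"
  shows "r \<le> r'"
proof (rule ccontr)
  assume "\<not> r \<le> r'"
  hence "\<phi> r' - \<phi> r \<le> \<psi> r' - \<psi> r" using r r' incr unfolding is_least_minimizer_def by simp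
  moreover have "\<psi> r' \<le> \<psi> r" using r r' unfolding is_least_minimizer_def by blast
  ultimately have "\<forall>r''\<in>S. \<phi> r' \<le> \<phi> r''" using r unfolding is_least_minimizer_def by force
  hence "r \<le> r'" using r r' unfolding is_least_minimizer_def by blast
  with \<open>\<not> r \<le> r'\<close> show False by simp
qed

section \<open>Value functions of the dynamic programme\<close>

text \<open>Value functions \<open>f r p\<close> depend on the charge level \<open>r \<in> [0, R]\<close> and the spot price \<open>p\<close>; the next
  price is \<open>p e + s + Z\<close> with \<open>Z \<sim> N\<close>, \<open>e = exp (-\<kappa>\<^sub>Y)\<close> and a deterministic shift \<open>s\<close>, and \<open>X\<close>
  is the maximal charge per period. \<open>R \<le> X\<close> is the fast charging regime: from any level every
  target level in \<open>[r, R]\<close> is reachable within one period.\<close>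

locale charging_dp = integrable_real_distribution N for N :: "real measure" +
  fixes R e X :: real
  assumes R_pos: "0 < R" and e_pos: "0 < e" and R_le_X: "R \<le> X"
begin

definition lin_growth :: "(real \<Rightarrow> real \<Rightarrow> real) \<Rightarrow> bool" where
  "lin_growth f \<longleftrightarrow> (\<exists>a b. 0 \<le> a \<and> 0 \<le> b \<and> (\<forall>r\<in>{0..R}. \<forall>p. \<bar>f r p\<bar> \<le> a + b * \<bar>p\<bar>))"

definition lipschitz_in_level :: "(real \<Rightarrow> real \<Rightarrow> real) \<Rightarrow> bool" where
  "lipschitz_in_level f \<longleftrightarrow>
     (\<exists>a b. 0 \<le> a \<and> 0 \<le> b \<and> (\<forall>p. (a + b * \<bar>p\<bar>)-lipschitz_on {0..R} (\<lambda>r. f r p)))"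

definition convex_in_level :: "(real \<Rightarrow> real \<Rightarrow> real) \<Rightarrow> bool" where
  "convex_in_level f \<longleftrightarrow> (\<forall>p. convex_on {0..R} (\<lambda>r. f r p))"

definition mono_in_price :: "(real \<Rightarrow> real \<Rightarrow> real) \<Rightarrow> bool" where
  "mono_in_price f \<longleftrightarrow> (\<forall>r\<in>{0..R}. mono (f r))"

definition mono_increments :: "(real \<Rightarrow> real \<Rightarrow> real) \<Rightarrow> bool" where
  "mono_increments f \<longleftrightarrow> (\<forall>r\<^sub>1\<in>{0..R}. \<forall>r\<^sub>2\<in>{0..R}. r\<^sub>1 \<le> r\<^sub>2 \<longrightarrow> mono (\<lambda>p. f r\<^sub>1 p - f r\<^sub>2 p))"

definition admissible :: "(real \<Rightarrow> real \<Rightarrow> real) \<Rightarrow> bool" where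
  "admissible f \<longleftrightarrow> lin_growth f \<and> lipschitz_in_level f \<and> convex_in_level f \<and> mono_in_price f
     \<and> mono_increments f"

definition slopes_ge :: "(real \<Rightarrow> real \<Rightarrow> real) \<Rightarrow> (real \<Rightarrow> real \<Rightarrow> real) \<Rightarrow> bool" where
  "slopes_ge f g \<longleftrightarrow> (\<forall>r\<^sub>1\<in>{0..R}. \<forall>r\<^sub>2\<in>{0..R}. \<forall>p. r\<^sub>1 \<le> r\<^sub>2 \<longrightarrow> f r\<^sub>1 p - f r\<^sub>2 p \<le> g r\<^sub>1 p - g r\<^sub>2 p)"

lemma lin_growthE:
  assumes "lin_growth f"
  obtains a b where "0 \<le> a" "0 \<le> b" "\<And>r p. r \<in> {0..R} \<Longrightarrow> \<bar>f r p\<bar> \<le> a + b * \<bar>p\<bar>"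
  using assms unfolding lin_growth_def by blast

lemma lipschitz_in_level_iff:
  "lipschitz_in_level f \<longleftrightarrow> (\<exists>a b. 0 \<le> a \<and> 0 \<le> b \<and>
     (\<forall>r\<^sub>1\<in>{0..R}. \<forall>r\<^sub>2\<in>{0..R}. \<forall>p. \<bar>f r\<^sub>1 p - f r\<^sub>2 p\<bar> \<le> (a + b * \<bar>p\<bar>) * \<bar>r\<^sub>1 - r\<^sub>2\<bar>))"
proof -
  have "(L-lipschitz_on {0..R} (\<lambda>r. f r p)) \<longleftrightarrow>
      (\<forall>r\<^sub>1\<in>{0..R}. \<forall>r\<^sub>2\<in>{0..R}. \<bar>f r\<^sub>1 p - f r\<^sub>2 p\<bar> \<le> L * \<bar>r\<^sub>1 - r\<^sub>2\<bar>)" if "0 \<le> L" for L p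
    using that by (simp add: lipschitz_on_def dist_real_def)
  thus ?thesis unfolding lipschitz_in_level_def by (metis abs_ge_zero add_nonneg_nonneg mult_nonneg_nonneg)
qed

lemma lipschitz_in_levelE:
  assumes "lipschitz_in_level f"
  obtains a b where "0 \<le> a" "0 \<le> b"
    "\<And>r\<^sub>1 r\<^sub>2 p. r\<^sub>1 \<in> {0..R} \<Longrightarrow> r\<^sub>2 \<in> {0..R} \<Longrightarrow> \<bar>f r\<^sub>1 p - f r\<^sub>2 p\<bar> \<le> (a + b * \<bar>p\<bar>) * \<bar>r\<^sub>1 - r\<^sub>2\<bar>"
  using assms unfolding lipschitz_in_level_iff by blast

lemma convex_combination_in_level:
  fixes x y t :: real
  assumes "x \<in> {0..R}" "y \<in> {0..R}" "0 \<le> t" "t \<le> 1"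
  shows "(1 - t) * x + t * y \<in> {0..R}"
proof -
  have "0 \<le> (1 - t) * x" "0 \<le> t * y" using assms by auto
  moreover have "(1 - t) * x \<le> (1 - t) * R" "t * y \<le> t * R" using assms by (auto intro: mult_left_mono)
  ultimately show ?thesis by (auto simp: algebra_simps)
qed

lemma convex_in_level_iff:
  "convex_in_level f \<longleftrightarrow> (\<forall>p. \<forall>x\<in>{0..R}. \<forall>y\<in>{0..R}. \<forall>t. 0 \<le> t \<and> t \<le> 1 \<longrightarrow>
      f ((1 - t) * x + t * y) p \<le> (1 - t) * f x p + t * f y p)"
proof -
  have "convex_on {0..R} (\<lambda>r. f r p) \<longleftrightarrow> (\<forall>x\<in>{0..R}. \<forall>y\<in>{0..R}. \<forall>t. 0 \<le> t \<and> t \<le> 1 \<longrightarrow>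
      f ((1 - t) * x + t * y) p \<le> (1 - t) * f x p + t * f y p)" for p
    using convex_onD[of "{0..R}" "\<lambda>r. f r p"] convex_onI[of "{0..R}" "\<lambda>r. f r p"] by auto
  thus ?thesis unfolding convex_in_level_def by blast
qed

lemma convex_in_levelD:
  "convex_in_level f \<Longrightarrow> x \<in> {0..R} \<Longrightarrow> y \<in> {0..R} \<Longrightarrow> 0 \<le> t \<Longrightarrow> t \<le> 1 \<Longrightarrow>
    f ((1 - t) * x + t * y) p \<le> (1 - t) * f x p + t * f y p"
  unfolding convex_in_level_iff by blast

lemma admissible_cong:
  assumes eq: "\<And>r p. r \<in> {0..R} \<Longrightarrow> f r p = g r p" and f: "admissible f"
  shows "admissible g"
proof -
  have eq': "\<And>r. r \<in> {0..R} \<Longrightarrow> f r = g r" using eq by blast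
  have "lin_growth g" using f eq unfolding admissible_def lin_growth_def by (metis (no_types, lifting))
  moreover have "lipschitz_in_level g"
    using f eq unfolding admissible_def lipschitz_in_level_iff by (metis (no_types, lifting))
  moreover have "convex_in_level g"
    using f eq convex_combination_in_level unfolding admissible_def convex_in_level_iff
    by (metis (no_types, lifting))
  moreover have "mono_in_price g" using f eq' unfolding admissible_def mono_in_price_def by simp
  moreover have "mono_increments g"
    using f eq unfolding admissible_def mono_increments_def mono_def by (metis (no_types, lifting))
  ultimately show ?thesis by (simp add: admissible_def)
qed

lemma slopes_ge_cong:
  assumes "\<And>r p. r \<in> {0..R} \<Longrightarrow> f r p = f' r p" "\<And>r p. r \<in> {0..R} \<Longrightarrow> g r p = g' r p"
    and "slopes_ge f g"
  shows "slopes_ge f' g'"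
  using assms unfolding slopes_ge_def by (metis (no_types, lifting))

lemma integrable_shift_of_growth:
  fixes g :: "real \<Rightarrow> real"
  assumes "g \<in> borel_measurable borel" "\<And>y. \<bar>g y\<bar> \<le> a + b * \<bar>y\<bar>" "0 \<le> b"
  shows "integrable N (\<lambda>z. g (c + z))"
proof (rule Bochner_Integration.integrable_bound)
  show "integrable N (\<lambda>z. (a + b * \<bar>c\<bar>) + b * \<bar>z\<bar>)"
    using integrable_abs[OF integrable_id]
    by (intro Bochner_Integration.integrable_add integrable_const integrable_mult_right)
  show "(\<lambda>z. g (c + z)) \<in> borel_measurable N" using assms(1) by measurable
  show "AE z in N. norm (g (c + z)) \<le> norm ((a + b * \<bar>c\<bar>) + b * \<bar>z\<bar>)"
    using abs_shift_growth_le[OF assms(2,3)]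
    by (intro AE_I2) (metis abs_ge_self order_trans real_norm_def)
qed

lemma rho_spectral_shift_growth:
  assumes b: "valid_risk_level b" and ak: "0 \<le> a" "0 \<le> k"
  obtains A B where "0 \<le> A" "0 \<le> B"
    "\<And>g c. integrable N (\<lambda>z. g (c + z)) \<Longrightarrow> (\<And>y. \<bar>g y\<bar> \<le> a + k * \<bar>y\<bar>) \<Longrightarrow>
      \<bar>rho_spectral b (\<lambda>z. g (c + z))\<bar> \<le> A + B * \<bar>c\<bar>"
proof
  define M where "M = (\<integral>z. \<bar>z\<bar> \<partial>N) + \<bar>fst (quantile_split (snd b))\<bar>"
  have \<alpha>: "0 < 1 - snd b" using b by (simp add: valid_risk_level_def)
  show "0 \<le> (2 * a + k * M) / (1 - snd b)" "0 \<le> 2 * k / (1 - snd b)"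
    using ak \<alpha> by (auto simp: M_def)
  fix g c assume g: "integrable N (\<lambda>z. g (c + z))" "\<And>y. \<bar>g y\<bar> \<le> a + k * \<bar>y\<bar>"
  define h where "h = (\<lambda>z. (a + k * \<bar>c\<bar>) + k * \<bar>z\<bar>)"
  have "integrable N h"
    unfolding h_def using integrable_abs[OF integrable_id]
    by (intro Bochner_Integration.integrable_add integrable_mult_right integrable_const)
  moreover have "(\<integral>z. h z \<partial>N) = (a + k * \<bar>c\<bar>) + k * (\<integral>z. \<bar>z\<bar> \<partial>N)"
    unfolding h_def using integrable_abs[OF integrable_id] prob_space by simp
  ultimately have "\<bar>rho_spectral b (\<lambda>z. g (c + z))\<bar> \<le> (2 * (a + k * \<bar>c\<bar>) + k * M) / (1 - snd b)"
    using abs_rho_spectral_le[OF b g(1), of h] abs_shift_growth_le[OF g(2) ak(2)]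
    unfolding M_def by (simp add: h_def algebra_simps)
  also have "\<dots> = (2 * a + k * M) / (1 - snd b) + 2 * k / (1 - snd b) * \<bar>c\<bar>"
    by (simp add: add_divide_distrib algebra_simps)
  finally show "\<bar>rho_spectral b (\<lambda>z. g (c + z))\<bar> \<le> (2 * a + k * M) / (1 - snd b) + 2 * k / (1 - snd b) * \<bar>c\<bar>" .
qed

lemma abs_affine_le: "\<bar>p * e + s\<bar> \<le> e * \<bar>p\<bar> + \<bar>s\<bar>"
  using abs_triangle_ineq[of "p * e" s] e_pos by (simp add: abs_mult mult.commute)

lemma admissible_integrable:
  assumes "admissible f" "r \<in> {0..R}"
  shows "integrable N (\<lambda>z. f r (c + z))"
proof -
  obtain a b where "0 \<le> b" "\<And>p. \<bar>f r p\<bar> \<le> a + b * \<bar>p\<bar>"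
    using assms unfolding admissible_def by (metis lin_growthE)
  moreover have "f r \<in> borel_measurable borel"
    using assms unfolding admissible_def mono_in_price_def by (blast intro: borel_measurable_mono)
  ultimately show ?thesis by (intro integrable_shift_of_growth)
qed

definition post_decision :: "real \<times> real \<Rightarrow> real \<Rightarrow> (real \<Rightarrow> real \<Rightarrow> real) \<Rightarrow> real \<Rightarrow> real \<Rightarrow> real" where
  "post_decision b s f r p = rho b N (\<lambda>z. f r (p * e + s + z))"

lemma post_decision_eq_spectral:
  assumes "valid_risk_level b" "admissible f" "r \<in> {0..R}"
  shows "post_decision b s f r p = rho_spectral b (\<lambda>z. f r (p * e + s + z))"
proof -
  have "mono (\<lambda>z. f r (p * e + s + z))"
    using assms(2,3) unfolding admissible_def mono_in_price_def mono_def by simp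
  thus ?thesis
    unfolding post_decision_def by (rule rho_eq_rho_spectral[OF assms(1) _ admissible_integrable[OF assms(2,3)]])
qed

lemma post_decision_diff_eq_spectral:
  assumes "valid_risk_level b" "admissible f" "r\<^sub>1 \<in> {0..R}" "r\<^sub>2 \<in> {0..R}"
  shows "post_decision b s f r\<^sub>1 p - post_decision b s f r\<^sub>2 p
    = rho_spectral b (\<lambda>z. f r\<^sub>1 (p * e + s + z) - f r\<^sub>2 (p * e + s + z))"
  using post_decision_eq_spectral[OF assms(1,2,3)] post_decision_eq_spectral[OF assms(1,2,4)]
    rho_spectral_diff[OF admissible_integrable[OF assms(2,3)] admissible_integrable[OF assms(2,4)]]
  by simp

lemma post_decision_lin_growth:
  assumes b: "valid_risk_level b" and f: "admissible f"
  shows "lin_growth (post_decision b s f)"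
proof -
  obtain a k where ak: "0 \<le> a" "0 \<le> k" "\<And>r p. r \<in> {0..R} \<Longrightarrow> \<bar>f r p\<bar> \<le> a + k * \<bar>p\<bar>"
    using f unfolding admissible_def by (metis lin_growthE)
  obtain A B where AB: "0 \<le> A" "0 \<le> B" "\<And>g c. integrable N (\<lambda>z. g (c + z)) \<Longrightarrow>
      (\<And>y. \<bar>g y\<bar> \<le> a + k * \<bar>y\<bar>) \<Longrightarrow> \<bar>rho_spectral b (\<lambda>z. g (c + z))\<bar> \<le> A + B * \<bar>c\<bar>"
    using rho_spectral_shift_growth[OF b ak(1,2)] by blast
  have "\<bar>post_decision b s f r p\<bar> \<le> (A + B * \<bar>s\<bar>) + (B * e) * \<bar>p\<bar>" if r: "r \<in> {0..R}" for r p
  proof -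
    have "\<bar>post_decision b s f r p\<bar> \<le> A + B * \<bar>p * e + s\<bar>"
      using post_decision_eq_spectral[OF b f r] AB(3)[of "f r" "p * e + s", OF admissible_integrable[OF f r] ak(3)[OF r]]
      by simp
    also have "\<dots> \<le> A + B * (e * \<bar>p\<bar> + \<bar>s\<bar>)" using AB(2) abs_affine_le by (simp add: mult_left_mono)
    finally show ?thesis by (simp add: algebra_simps)
  qed
  thus ?thesis unfolding lin_growth_def using AB(1,2) e_pos by (intro exI[of _ "A + B * \<bar>s\<bar>"] exI[of _ "B * e"]) auto
qed

lemma post_decision_lipschitz:
  assumes b: "valid_risk_level b" and f: "admissible f"
  shows "lipschitz_in_level (post_decision b s f)"
proof -
  obtain a k where ak: "0 \<le> a" "0 \<le> k" and
    lip: "\<And>r\<^sub>1 r\<^sub>2 p. r\<^sub>1 \<in> {0..R} \<Longrightarrow> r\<^sub>2 \<in> {0..R} \<Longrightarrow> \<bar>f r\<^sub>1 p - f r\<^sub>2 p\<bar> \<le> (a + k * \<bar>p\<bar>) * \<bar>r\<^sub>1 - r\<^sub>2\<bar>"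
    using f unfolding admissible_def by (metis lipschitz_in_levelE)
  obtain A B where AB: "0 \<le> A" "0 \<le> B" "\<And>g c. integrable N (\<lambda>z. g (c + z)) \<Longrightarrow>
      (\<And>y. \<bar>g y\<bar> \<le> a + k * \<bar>y\<bar>) \<Longrightarrow> \<bar>rho_spectral b (\<lambda>z. g (c + z))\<bar> \<le> A + B * \<bar>c\<bar>"
    using rho_spectral_shift_growth[OF b ak] by blast
  have "\<bar>post_decision b s f r\<^sub>1 p - post_decision b s f r\<^sub>2 p\<bar> \<le> ((A + B * \<bar>s\<bar>) + (B * e) * \<bar>p\<bar>) * \<bar>r\<^sub>1 - r\<^sub>2\<bar>"
    if r: "r\<^sub>1 \<in> {0..R}" "r\<^sub>2 \<in> {0..R}" for r\<^sub>1 r\<^sub>2 p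
  proof (cases "r\<^sub>1 = r\<^sub>2")
    case False
    define d where "d = \<bar>r\<^sub>1 - r\<^sub>2\<bar>"
    have d: "0 < d" using False by (simp add: d_def)
    define g where "g y = (f r\<^sub>1 y - f r\<^sub>2 y) / d" for y
    define c where "c = p * e + s"
    have "integrable N (\<lambda>z. g (c + z))"
      unfolding g_def using admissible_integrable[OF f r(1)] admissible_integrable[OF f r(2)]
      by (intro Bochner_Integration.integrable_diff integrable_divide)
    moreover have "\<bar>g y\<bar> \<le> a + k * \<bar>y\<bar>" for y
      using lip[OF r, of y] d unfolding g_def d_def by (simp add: abs_div pos_divide_le_eq)
    ultimately have "\<bar>rho_spectral b (\<lambda>z. g (c + z))\<bar> \<le> A + B * \<bar>c\<bar>" by (rule AB(3))
    moreover have "post_decision b s f r\<^sub>1 p - post_decision b s f r\<^sub>2 p = d * rho_spectral b (\<lambda>z. g (c + z))"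
      unfolding post_decision_diff_eq_spectral[OF b f r] rho_spectral_cmult[symmetric]
      using d by (simp add: g_def c_def)
    moreover have "A + B * \<bar>c\<bar> \<le> (A + B * \<bar>s\<bar>) + (B * e) * \<bar>p\<bar>"
      using mult_left_mono[OF abs_affine_le[of p s] AB(2)] unfolding c_def by (simp add: algebra_simps)
    ultimately show ?thesis
      using d unfolding d_def by (simp add: abs_mult mult.commute mult_left_mono)
  qed simp
  thus ?thesis
    unfolding lipschitz_in_level_iff using AB(1,2) e_pos
    by (intro exI[of _ "A + B * \<bar>s\<bar>"] exI[of _ "B * e"]) auto
qed

lemma post_decision_convex:
  assumes b: "valid_risk_level b" and f: "admissible f"
  shows "convex_in_level (post_decision b s f)"
  unfolding convex_in_level_iff
proof (intro allI ballI impI)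
  fix p x y t :: real assume xy: "x \<in> {0..R}" "y \<in> {0..R}" and t: "0 \<le> t \<and> t \<le> 1"
  define r where "r = (1 - t) * x + t * y"
  have r: "r \<in> {0..R}" unfolding r_def using xy t by (intro convex_combination_in_level) auto
  let ?u = "\<lambda>v z. f v (p * e + s + z)"
  have "rho_spectral b (?u r) \<le> rho_spectral b (\<lambda>z. (1 - t) * ?u x z + t * ?u y z)"
  proof (rule rho_spectral_mono[OF b admissible_integrable[OF f r]])
    show "integrable N (\<lambda>z. (1 - t) * ?u x z + t * ?u y z)"
      using admissible_integrable[OF f xy(1)] admissible_integrable[OF f xy(2)]
      by (intro Bochner_Integration.integrable_add integrable_mult_right)
    show "?u r z \<le> (1 - t) * ?u x z + t * ?u y z" for z
      using f xy t unfolding admissible_def r_def by (blast intro: convex_in_levelD)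
  qed
  also have "\<dots> = (1 - t) * rho_spectral b (?u x) + t * rho_spectral b (?u y)"
    using rho_spectral_add[OF integrable_mult_right[OF admissible_integrable[OF f xy(1)]]
        integrable_mult_right[OF admissible_integrable[OF f xy(2)]]] rho_spectral_cmult
    by simp
  finally show "post_decision b s f ((1 - t) * x + t * y) p
    \<le> (1 - t) * post_decision b s f x p + t * post_decision b s f y p"
    using post_decision_eq_spectral[OF b f] r xy unfolding r_def by simp
qed

lemma post_decision_mono_in_price:
  assumes b: "valid_risk_level b" and f: "admissible f"
  shows "mono_in_price (post_decision b s f)"
  unfolding mono_in_price_def
proof (intro ballI monoI)
  fix r p q :: real assume r: "r \<in> {0..R}" and pq: "p \<le> q"
  have "rho_spectral b (\<lambda>z. f r (p * e + s + z)) \<le> rho_spectral b (\<lambda>z. f r (q * e + s + z))"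
  proof (rule rho_spectral_mono[OF b admissible_integrable[OF f r] admissible_integrable[OF f r]])
    have "p * e + s + z \<le> q * e + s + z" for z using pq e_pos by (simp add: mult_right_mono)
    thus "f r (p * e + s + z) \<le> f r (q * e + s + z)" for z
      using f r unfolding admissible_def mono_in_price_def mono_def by blast
  qed
  thus "post_decision b s f r p \<le> post_decision b s f r q"
    using post_decision_eq_spectral[OF b f r] by simp
qed

lemma post_decision_mono_increments:
  assumes b: "valid_risk_level b" and f: "admissible f"
  shows "mono_increments (post_decision b s f)"
  unfolding mono_increments_def
proof (intro ballI impI monoI)
  fix r\<^sub>1 r\<^sub>2 p q :: real assume r: "r\<^sub>1 \<in> {0..R}" "r\<^sub>2 \<in> {0..R}" "r\<^sub>1 \<le> r\<^sub>2" and pq: "p \<le> q"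
  let ?w = "\<lambda>x z. f r\<^sub>1 (x * e + s + z) - f r\<^sub>2 (x * e + s + z)"
  have i: "integrable N (?w x)" for x
    using admissible_integrable[OF f r(1)] admissible_integrable[OF f r(2)]
    by (rule Bochner_Integration.integrable_diff)
  have "rho_spectral b (?w p) \<le> rho_spectral b (?w q)"
  proof (rule rho_spectral_mono[OF b i i])
    have "p * e + s + z \<le> q * e + s + z" for z using pq e_pos by (simp add: mult_right_mono)
    thus "?w p z \<le> ?w q z" for z
      using f r unfolding admissible_def mono_increments_def mono_def by blast
  qed
  thus "post_decision b s f r\<^sub>1 p - post_decision b s f r\<^sub>2 p \<le> post_decision b s f r\<^sub>1 q - post_decision b s f r\<^sub>2 q"
    using post_decision_diff_eq_spectral[OF b f r(1,2)] by simp
qed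

lemma admissible_post_decision:
  "valid_risk_level b \<Longrightarrow> admissible f \<Longrightarrow> admissible (post_decision b s f)"
  using post_decision_lin_growth post_decision_lipschitz post_decision_convex
    post_decision_mono_in_price post_decision_mono_increments
  by (simp add: admissible_def)

text \<open>The comparison of risk aversions enters here: the increment \<open>w = g r\<^sub>1 - g r\<^sub>2\<close> is
  nondecreasing in the noise, so \<open>rho\<close> acts on it through \<open>rho_spectral\<close>, and \<open>rho b N w\<close> grows with
  \<open>b\<close>.\<close>

lemma post_decision_slopes_ge:
  assumes b: "valid_risk_level b" "valid_risk_level b'" and le: "fst b \<le> fst b'" "snd b \<le> snd b'"
    and fg: "admissible f" "admissible g" "slopes_ge f g"
  shows "slopes_ge (post_decision b s f) (post_decision b' s g)"
  unfolding slopes_ge_def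
proof (intro ballI allI impI)
  fix r\<^sub>1 r\<^sub>2 p assume r: "r\<^sub>1 \<in> {0..R}" "r\<^sub>2 \<in> {0..R}" "r\<^sub>1 \<le> r\<^sub>2"
  define w where "w = (\<lambda>z. g r\<^sub>1 (p * e + s + z) - g r\<^sub>2 (p * e + s + z))"
  have w: "integrable N w" "mono w"
    unfolding w_def using admissible_integrable[OF fg(2) r(1)] admissible_integrable[OF fg(2) r(2)]
      fg(2) r unfolding admissible_def mono_increments_def mono_def
    by (auto intro: Bochner_Integration.integrable_diff)
  have "post_decision b s f r\<^sub>1 p - post_decision b s f r\<^sub>2 p
      = rho_spectral b (\<lambda>z. f r\<^sub>1 (p * e + s + z) - f r\<^sub>2 (p * e + s + z))"
    by (rule post_decision_diff_eq_spectral[OF b(1) fg(1) r(1,2)])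
  also have "\<dots> \<le> rho_spectral b w"
  proof (rule rho_spectral_mono[OF b(1) _ w(1)])
    show "integrable N (\<lambda>z. f r\<^sub>1 (p * e + s + z) - f r\<^sub>2 (p * e + s + z))"
      using admissible_integrable[OF fg(1) r(1)] admissible_integrable[OF fg(1) r(2)]
      by (rule Bochner_Integration.integrable_diff)
    show "f r\<^sub>1 (p * e + s + z) - f r\<^sub>2 (p * e + s + z) \<le> w z" for z
      using fg(3) r unfolding slopes_ge_def w_def by blast
  qed
  also have "\<dots> = rho b N w" using rho_eq_rho_spectral[OF b(1) w(2,1)] by simp
  also have "\<dots> \<le> rho b' N w" by (rule rho_mono_risk_aversion[OF w(1) b le])
  also have "\<dots> = post_decision b' s g r\<^sub>1 p - post_decision b' s g r\<^sub>2 p"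
    using rho_eq_rho_spectral[OF b(2) w(2,1)] post_decision_diff_eq_spectral[OF b(2) fg(2) r(1,2)]
    by (simp add: w_def)
  finally show "post_decision b s f r\<^sub>1 p - post_decision b s f r\<^sub>2 p
    \<le> post_decision b' s g r\<^sub>1 p - post_decision b' s g r\<^sub>2 p" .
qed

definition level_cost :: "(real \<Rightarrow> real \<Rightarrow> real) \<Rightarrow> real \<Rightarrow> real \<Rightarrow> real" where
  "level_cost f p s = s * p + f s p"

definition reachable_min :: "(real \<Rightarrow> real \<Rightarrow> real) \<Rightarrow> real \<Rightarrow> real \<Rightarrow> real" where
  "reachable_min f p r = (INF s\<in>{r..R}. level_cost f p s)"

definition bellman_min :: "real \<Rightarrow> (real \<Rightarrow> real \<Rightarrow> real) \<Rightarrow> real \<Rightarrow> real \<Rightarrow> real" where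
  "bellman_min c f r p = (INF x\<in>{0..min (R - r) X}. x * p - c + f (r + x) p)"

lemma abs_level_cost_le:
  assumes "\<And>r p. r \<in> {0..R} \<Longrightarrow> \<bar>f r p\<bar> \<le> a + b * \<bar>p\<bar>" "s \<in> {0..R}"
  shows "\<bar>level_cost f p s\<bar> \<le> R * \<bar>p\<bar> + (a + b * \<bar>p\<bar>)"
proof -
  have "\<bar>s * p\<bar> \<le> R * \<bar>p\<bar>" using assms(2) by (auto simp: abs_mult intro: mult_right_mono)
  thus ?thesis
    using assms(1)[OF assms(2), of p] abs_triangle_ineq[of "s * p" "f s p"] unfolding level_cost_def by linarith
qed

lemma level_cost_bounded:
  assumes "lin_growth f"
  obtains B where "\<And>s. s \<in> {0..R} \<Longrightarrow> \<bar>level_cost f p s\<bar> \<le> B"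
  using assms by (elim lin_growthE) (blast intro: abs_level_cost_le)

lemma level_cost_convex:
  "convex_in_level f \<Longrightarrow> x \<in> {0..R} \<Longrightarrow> y \<in> {0..R} \<Longrightarrow> 0 \<le> t \<Longrightarrow> t \<le> 1 \<Longrightarrow>
    level_cost f p ((1 - t) * x + t * y) \<le> (1 - t) * level_cost f p x + t * level_cost f p y"
  using convex_in_levelD[of f x y t p] unfolding level_cost_def by (simp add: algebra_simps)

lemma bdd_below_level_cost:
  assumes "lin_growth f" "S \<subseteq> {0..R}"
  shows "bdd_below (level_cost f p ` S)"
proof -
  obtain B where B: "\<And>s. s \<in> {0..R} \<Longrightarrow> \<bar>level_cost f p s\<bar> \<le> B"
    using level_cost_bounded[OF assms(1)] by blast
  show ?thesis by (rule bdd_below_image_of_abs_le[of S _ B]) (use B assms(2) in blast)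
qed

lemma continuous_on_level_cost:
  assumes "admissible f"
  shows "continuous_on {0..R} (level_cost f p)"
proof -
  obtain L where "L-lipschitz_on {0..R} (\<lambda>r. f r p)"
    using assms unfolding admissible_def lipschitz_in_level_def by blast
  hence "continuous_on {0..R} (\<lambda>r. f r p)" by (rule lipschitz_on_continuous_on)
  thus ?thesis unfolding level_cost_def by (intro continuous_intros)
qed

lemma bellman_min_eq:
  assumes "lin_growth f" "r \<in> {0..R}"
  shows "bellman_min c f r p = reachable_min f p r - r * p - c"
proof -
  have m: "min (R - r) X = R - r" using assms R_le_X by auto
  have img: "(\<lambda>x. r + x) ` {0..R - r} = {r..R}"
    using image_add_atLeastAtMost[of r 0 "R - r"] by (simp add: add.commute)
  have "bellman_min c f r p = (INF x\<in>{0..R - r}. (\<lambda>s. level_cost f p s + (- r * p - c)) (r + x))"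
    unfolding bellman_min_def m level_cost_def by (simp add: algebra_simps)
  also have "\<dots> = (INF s\<in>{r..R}. level_cost f p s + (- r * p - c))"
    unfolding img[symmetric] image_image by simp
  also have "\<dots> = reachable_min f p r + (- r * p - c)"
    unfolding reachable_min_def using assms by (intro cINF_add_const bdd_below_level_cost) auto
  finally show ?thesis by simp
qed

text \<open>By convexity the minimum over \<open>[r\<^sub>1, R]\<close> either lies in \<open>[r\<^sub>1, r\<^sub>2]\<close> or, if the cost still drops
  beyond \<open>r\<^sub>2\<close>, the cost is nonincreasing on \<open>[r\<^sub>1, r\<^sub>2]\<close>.\<close>

lemma reachable_min_diff:
  assumes f: "lin_growth f" "convex_in_level f" and r: "r\<^sub>1 \<in> {0..R}" "r\<^sub>2 \<in> {0..R}" "r\<^sub>1 \<le> r\<^sub>2"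
  shows "reachable_min f p r\<^sub>1 - reachable_min f p r\<^sub>2 = (INF s\<in>{r\<^sub>1..r\<^sub>2}. level_cost f p s) - level_cost f p r\<^sub>2"
proof -
  let ?W = "level_cost f p"
  define J where "J = (INF s\<in>{r\<^sub>1..r\<^sub>2}. ?W s)"
  define M where "M = reachable_min f p r\<^sub>2"
  have bdd1: "bdd_below (?W ` {r\<^sub>1..r\<^sub>2})" and bdd2: "bdd_below (?W ` {r\<^sub>2..R})"
    using r by (auto intro!: bdd_below_level_cost[OF f(1)])
  have split: "{r\<^sub>1..R} = {r\<^sub>1..r\<^sub>2} \<union> {r\<^sub>2..R}" using r by auto
  have min: "reachable_min f p r\<^sub>1 = min J M"
    unfolding reachable_min_def J_def M_def split image_Un using r bdd1 bdd2
    by (simp add: cInf_union_distrib inf_min)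
  have J_le: "J \<le> ?W r\<^sub>2" unfolding J_def by (rule cINF_lower[OF bdd1]) (use r in auto)
  have M_le: "M \<le> ?W r\<^sub>2" unfolding M_def reachable_min_def by (rule cINF_lower[OF bdd2]) (use r in auto)
  show ?thesis
  proof (cases "M = ?W r\<^sub>2")
    case True thus ?thesis using min J_le unfolding J_def M_def by simp
  next
    case False
    hence "M < ?W r\<^sub>2" using M_le by simp
    have "\<exists>x\<in>?W ` {r\<^sub>2..R}. x < ?W r\<^sub>2"
      by (rule cInf_lessD) (use r \<open>M < ?W r\<^sub>2\<close> in \<open>auto simp: M_def reachable_min_def\<close>)
    then obtain t where t: "t \<in> {r\<^sub>2..R}" "?W t < ?W r\<^sub>2" by blast
    have cvx: "convex_on {0..R} ?W"
      using level_cost_convex[OF f(2)] by (intro convex_onI) (auto simp: convex_real_interval)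
    have "?W r\<^sub>2 \<le> J"
      unfolding J_def
    proof (rule cINF_greatest)
      show "{r\<^sub>1..r\<^sub>2} \<noteq> {}" using r by simp
      fix s assume s: "s \<in> {r\<^sub>1..r\<^sub>2}"
      have "r\<^sub>2 < t" using t by (cases "t = r\<^sub>2") auto
      thus "?W r\<^sub>2 \<le> ?W s"
        using convex_on_le_left_of_descent[OF cvx, of s t r\<^sub>2] s t r by auto
    qed
    thus ?thesis using J_le min \<open>M < ?W r\<^sub>2\<close> unfolding J_def M_def by simp
  qed
qed

lemma bellman_min_diff:
  assumes f: "lin_growth f" "convex_in_level f" and r: "r\<^sub>1 \<in> {0..R}" "r\<^sub>2 \<in> {0..R}" "r\<^sub>1 \<le> r\<^sub>2"
  shows "bellman_min c f r\<^sub>1 p - bellman_min c f r\<^sub>2 p = (INF s\<in>{r\<^sub>1..r\<^sub>2}. (s - r\<^sub>1) * p + f s p - f r\<^sub>2 p)"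
proof -
  have "bellman_min c f r\<^sub>1 p - bellman_min c f r\<^sub>2 p
      = reachable_min f p r\<^sub>1 - reachable_min f p r\<^sub>2 + (r\<^sub>2 - r\<^sub>1) * p"
    using bellman_min_eq[OF f(1) r(1), of c p] bellman_min_eq[OF f(1) r(2), of c p] by (simp add: algebra_simps)
  also have "\<dots> = (INF s\<in>{r\<^sub>1..r\<^sub>2}. level_cost f p s) + ((r\<^sub>2 - r\<^sub>1) * p - level_cost f p r\<^sub>2)"
    using reachable_min_diff[OF f r] by simp
  also have "\<dots> = (INF s\<in>{r\<^sub>1..r\<^sub>2}. level_cost f p s + ((r\<^sub>2 - r\<^sub>1) * p - level_cost f p r\<^sub>2))"
    using r by (intro cINF_add_const[symmetric] bdd_below_level_cost[OF f(1)]) auto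
  also have "\<dots> = (INF s\<in>{r\<^sub>1..r\<^sub>2}. (s - r\<^sub>1) * p + f s p - f r\<^sub>2 p)"
    unfolding level_cost_def by (simp add: algebra_simps)
  finally show ?thesis .
qed

lemma abs_bellman_increment_le:
  assumes lip: "\<And>r\<^sub>1 r\<^sub>2 p. r\<^sub>1 \<in> {0..R} \<Longrightarrow> r\<^sub>2 \<in> {0..R} \<Longrightarrow> \<bar>f r\<^sub>1 p - f r\<^sub>2 p\<bar> \<le> (a + b * \<bar>p\<bar>) * \<bar>r\<^sub>1 - r\<^sub>2\<bar>"
    and ab: "0 \<le> a" "0 \<le> b" and r: "r\<^sub>1 \<in> {0..R}" "r\<^sub>2 \<in> {0..R}" and s: "s \<in> {r\<^sub>1..r\<^sub>2}"
  shows "\<bar>(s - r\<^sub>1) * p + f s p - f r\<^sub>2 p\<bar> \<le> (\<bar>p\<bar> + a + b * \<bar>p\<bar>) * (r\<^sub>2 - r\<^sub>1)"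
proof -
  have "\<bar>(s - r\<^sub>1) * p\<bar> \<le> (r\<^sub>2 - r\<^sub>1) * \<bar>p\<bar>" using s by (auto simp: abs_mult intro: mult_right_mono)
  moreover have "\<bar>f s p - f r\<^sub>2 p\<bar> \<le> (a + b * \<bar>p\<bar>) * (r\<^sub>2 - r\<^sub>1)"
  proof -
    have "\<bar>f s p - f r\<^sub>2 p\<bar> \<le> (a + b * \<bar>p\<bar>) * \<bar>s - r\<^sub>2\<bar>" using r s by (intro lip) auto
    also have "\<dots> \<le> (a + b * \<bar>p\<bar>) * (r\<^sub>2 - r\<^sub>1)" using s ab by (intro mult_left_mono) auto
    finally show ?thesis .
  qed
  ultimately show ?thesis
    using abs_triangle_ineq[of "(s - r\<^sub>1) * p" "f s p - f r\<^sub>2 p"] by (simp add: algebra_simps)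
qed

lemma bellman_min_lipschitz:
  assumes f: "admissible f"
  shows "lipschitz_in_level (bellman_min c f)"
proof -
  obtain a b where ab: "0 \<le> a" "0 \<le> b" and lip: "\<And>r\<^sub>1 r\<^sub>2 p. r\<^sub>1 \<in> {0..R} \<Longrightarrow> r\<^sub>2 \<in> {0..R} \<Longrightarrow>
      \<bar>f r\<^sub>1 p - f r\<^sub>2 p\<bar> \<le> (a + b * \<bar>p\<bar>) * \<bar>r\<^sub>1 - r\<^sub>2\<bar>"
    using f unfolding admissible_def by (metis lipschitz_in_levelE)
  have f': "lin_growth f" "convex_in_level f" using f by (auto simp: admissible_def)
  have ordered: "\<bar>bellman_min c f r\<^sub>1 p - bellman_min c f r\<^sub>2 p\<bar> \<le> (a + (1 + b) * \<bar>p\<bar>) * \<bar>r\<^sub>1 - r\<^sub>2\<bar>"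
    if r: "r\<^sub>1 \<in> {0..R}" "r\<^sub>2 \<in> {0..R}" "r\<^sub>1 \<le> r\<^sub>2" for r\<^sub>1 r\<^sub>2 p
  proof -
    have "\<bar>bellman_min c f r\<^sub>1 p - bellman_min c f r\<^sub>2 p\<bar> \<le> (\<bar>p\<bar> + a + b * \<bar>p\<bar>) * (r\<^sub>2 - r\<^sub>1)"
      unfolding bellman_min_diff[OF f' r]
      by (rule abs_cINF_le) (use r abs_bellman_increment_le[OF lip ab r(1,2)] in auto)
    thus ?thesis using r by (simp add: algebra_simps)
  qed
  have "\<bar>bellman_min c f r\<^sub>1 p - bellman_min c f r\<^sub>2 p\<bar> \<le> (a + (1 + b) * \<bar>p\<bar>) * \<bar>r\<^sub>1 - r\<^sub>2\<bar>"
    if "r\<^sub>1 \<in> {0..R}" "r\<^sub>2 \<in> {0..R}" for r\<^sub>1 r\<^sub>2 p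
    using ordered[of r\<^sub>1 r\<^sub>2 p] ordered[of r\<^sub>2 r\<^sub>1 p] that by (cases "r\<^sub>1 \<le> r\<^sub>2") (auto simp: abs_minus_commute)
  thus ?thesis unfolding lipschitz_in_level_iff using ab by (intro exI[of _ a] exI[of _ "1 + b"]) auto
qed

lemma bellman_min_mono_increments:
  assumes f: "admissible f"
  shows "mono_increments (bellman_min c f)"
  unfolding mono_increments_def
proof (intro ballI impI monoI)
  fix r\<^sub>1 r\<^sub>2 p q :: real assume r: "r\<^sub>1 \<in> {0..R}" "r\<^sub>2 \<in> {0..R}" "r\<^sub>1 \<le> r\<^sub>2" and pq: "p \<le> q"
  obtain a b where ab: "0 \<le> a" "0 \<le> b" and lip: "\<And>r\<^sub>1 r\<^sub>2 p. r\<^sub>1 \<in> {0..R} \<Longrightarrow> r\<^sub>2 \<in> {0..R} \<Longrightarrow>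
      \<bar>f r\<^sub>1 p - f r\<^sub>2 p\<bar> \<le> (a + b * \<bar>p\<bar>) * \<bar>r\<^sub>1 - r\<^sub>2\<bar>"
    using f unfolding admissible_def by (metis lipschitz_in_levelE)
  have f': "lin_growth f" "convex_in_level f" using f by (auto simp: admissible_def)
  show "bellman_min c f r\<^sub>1 p - bellman_min c f r\<^sub>2 p \<le> bellman_min c f r\<^sub>1 q - bellman_min c f r\<^sub>2 q"
    unfolding bellman_min_diff[OF f' r]
  proof (rule cINF_mono_of_abs_le)
    show "{r\<^sub>1..r\<^sub>2} \<noteq> {}" using r by auto
    show "\<bar>(s - r\<^sub>1) * p + f s p - f r\<^sub>2 p\<bar> \<le> (\<bar>p\<bar> + a + b * \<bar>p\<bar>) * (r\<^sub>2 - r\<^sub>1)" if "s \<in> {r\<^sub>1..r\<^sub>2}" for s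
      by (rule abs_bellman_increment_le[OF lip ab r(1,2) that])
    fix s assume s: "s \<in> {r\<^sub>1..r\<^sub>2}"
    have "(s - r\<^sub>1) * p \<le> (s - r\<^sub>1) * q" using s pq by (auto intro: mult_left_mono)
    moreover have "f s p - f r\<^sub>2 p \<le> f s q - f r\<^sub>2 q"
      using f s r pq unfolding admissible_def mono_increments_def mono_def by auto
    ultimately show "(s - r\<^sub>1) * p + f s p - f r\<^sub>2 p \<le> (s - r\<^sub>1) * q + f s q - f r\<^sub>2 q" by simp
  qed
qed

lemma bellman_min_slopes_ge:
  assumes f: "admissible f" and g: "admissible g" and fg: "slopes_ge f g"
  shows "slopes_ge (bellman_min c f) (bellman_min c g)"
  unfolding slopes_ge_def
proof (intro ballI allI impI)
  fix r\<^sub>1 r\<^sub>2 p assume r: "r\<^sub>1 \<in> {0..R}" "r\<^sub>2 \<in> {0..R}" "r\<^sub>1 \<le> r\<^sub>2"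
  obtain a b where ab: "0 \<le> a" "0 \<le> b" and lip: "\<And>r\<^sub>1 r\<^sub>2 p. r\<^sub>1 \<in> {0..R} \<Longrightarrow> r\<^sub>2 \<in> {0..R} \<Longrightarrow>
      \<bar>f r\<^sub>1 p - f r\<^sub>2 p\<bar> \<le> (a + b * \<bar>p\<bar>) * \<bar>r\<^sub>1 - r\<^sub>2\<bar>"
    using f unfolding admissible_def by (metis lipschitz_in_levelE)
  have f': "lin_growth f" "convex_in_level f" and g': "lin_growth g" "convex_in_level g"
    using f g by (auto simp: admissible_def)
  show "bellman_min c f r\<^sub>1 p - bellman_min c f r\<^sub>2 p \<le> bellman_min c g r\<^sub>1 p - bellman_min c g r\<^sub>2 p"
    unfolding bellman_min_diff[OF f' r] bellman_min_diff[OF g' r]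
  proof (rule cINF_mono_of_abs_le)
    show "{r\<^sub>1..r\<^sub>2} \<noteq> {}" using r by auto
    show "\<bar>(s - r\<^sub>1) * p + f s p - f r\<^sub>2 p\<bar> \<le> (\<bar>p\<bar> + a + b * \<bar>p\<bar>) * (r\<^sub>2 - r\<^sub>1)" if "s \<in> {r\<^sub>1..r\<^sub>2}" for s
      by (rule abs_bellman_increment_le[OF lip ab r(1,2) that])
    fix s assume s: "s \<in> {r\<^sub>1..r\<^sub>2}"
    have "f s p - f r\<^sub>2 p \<le> g s p - g r\<^sub>2 p" using fg s r unfolding slopes_ge_def by auto
    thus "(s - r\<^sub>1) * p + f s p - f r\<^sub>2 p \<le> (s - r\<^sub>1) * p + g s p - g r\<^sub>2 p" by simp
  qed
qed

lemma bellman_min_lin_growth: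
  assumes f: "admissible f"
  shows "lin_growth (bellman_min c f)"
proof -
  obtain a b where ab: "0 \<le> a" "0 \<le> b" "\<And>r p. r \<in> {0..R} \<Longrightarrow> \<bar>f r p\<bar> \<le> a + b * \<bar>p\<bar>"
    using f unfolding admissible_def by (metis lin_growthE)
  have f': "lin_growth f" using f by (simp add: admissible_def)
  have "\<bar>bellman_min c f r p\<bar> \<le> (a + \<bar>c\<bar>) + (2 * R + b) * \<bar>p\<bar>" if r: "r \<in> {0..R}" for r p
  proof -
    have "\<bar>reachable_min f p r\<bar> \<le> R * \<bar>p\<bar> + (a + b * \<bar>p\<bar>)"
      unfolding reachable_min_def by (rule abs_cINF_le) (use r abs_level_cost_le[OF ab(3)] in auto)
    moreover have "\<bar>r * p\<bar> \<le> R * \<bar>p\<bar>" using r by (auto simp: abs_mult intro: mult_right_mono)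
    ultimately show ?thesis unfolding bellman_min_eq[OF f' r] by (simp add: algebra_simps)
  qed
  thus ?thesis unfolding lin_growth_def using ab R_pos
    by (intro exI[of _ "a + \<bar>c\<bar>"] exI[of _ "2 * R + b"]) auto
qed

lemma bellman_min_mono_in_price:
  assumes f: "admissible f"
  shows "mono_in_price (bellman_min c f)"
  unfolding mono_in_price_def
proof (intro ballI monoI)
  fix r p q :: real assume r: "r \<in> {0..R}" and pq: "p \<le> q"
  have f': "lin_growth f" using f by (simp add: admissible_def)
  have "reachable_min f p r \<le> reachable_min f q r + (r * p - r * q)"
  proof -
    have "level_cost f p s \<le> level_cost f q s + (r * p - r * q)" if "s \<in> {r..R}" for s
    proof -
      have "(s - r) * p \<le> (s - r) * q" using that pq by (auto intro: mult_left_mono)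
      moreover have "f s p \<le> f s q"
        using f that r pq unfolding admissible_def mono_in_price_def mono_def by auto
      ultimately show ?thesis unfolding level_cost_def by (simp add: algebra_simps)
    qed
    hence "reachable_min f p r \<le> (INF s\<in>{r..R}. level_cost f q s + (r * p - r * q))"
      unfolding reachable_min_def using r
      by (intro cINF_mono) (auto intro!: bdd_below_level_cost[OF f'] bexI)
    thus ?thesis unfolding reachable_min_def using r
      by (subst (asm) cINF_add_const) (auto intro: bdd_below_level_cost[OF f'])
  qed
  thus "bellman_min c f r p \<le> bellman_min c f r q" unfolding bellman_min_eq[OF f' r] by simp
qed

lemma reachable_min_le_level_cost_combination:
  assumes f: "lin_growth f" "convex_in_level f" and xy: "x \<in> {0..R}" "y \<in> {0..R}" and t: "0 \<le> t" "t \<le> 1"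
    and s: "s\<^sub>1 \<in> {x..R}" "s\<^sub>2 \<in> {y..R}"
  shows "reachable_min f p ((1 - t) * x + t * y) \<le> (1 - t) * level_cost f p s\<^sub>1 + t * level_cost f p s\<^sub>2"
proof -
  have "(1 - t) * x \<le> (1 - t) * s\<^sub>1" "t * y \<le> t * s\<^sub>2" using s t by (auto intro: mult_left_mono)
  moreover have "(1 - t) * s\<^sub>1 + t * s\<^sub>2 \<in> {0..R}"
    using s xy t by (intro convex_combination_in_level) auto
  ultimately have "(1 - t) * s\<^sub>1 + t * s\<^sub>2 \<in> {(1 - t) * x + t * y..R}" by auto
  hence "reachable_min f p ((1 - t) * x + t * y) \<le> level_cost f p ((1 - t) * s\<^sub>1 + t * s\<^sub>2)"
    unfolding reachable_min_def using xy t
    by (intro cINF_lower bdd_below_level_cost[OF f(1)]) (auto dest: convex_combination_in_level)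
  also have "\<dots> \<le> (1 - t) * level_cost f p s\<^sub>1 + t * level_cost f p s\<^sub>2"
    using s xy t by (intro level_cost_convex[OF f(2)]) auto
  finally show ?thesis .
qed

lemma reachable_min_convex:
  assumes f: "lin_growth f" "convex_in_level f" and xy: "x \<in> {0..R}" "y \<in> {0..R}" and t: "0 \<le> t" "t \<le> 1"
  shows "reachable_min f p ((1 - t) * x + t * y) \<le> (1 - t) * reachable_min f p x + t * reachable_min f p y"
proof (cases "t = 0 \<or> t = 1")
  case False
  hence t': "0 < t" "t < 1" using t by auto
  let ?r = "(1 - t) * x + t * y"
  have "reachable_min f p ?r - t * level_cost f p s\<^sub>2 \<le> (1 - t) * reachable_min f p x"
    if s\<^sub>2: "s\<^sub>2 \<in> {y..R}" for s\<^sub>2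
  proof -
    have "(reachable_min f p ?r - t * level_cost f p s\<^sub>2) / (1 - t) \<le> reachable_min f p x"
      unfolding reachable_min_def[of f p x]
    proof (rule cINF_greatest)
      show "{x..R} \<noteq> {}" using xy by auto
      fix s\<^sub>1 assume "s\<^sub>1 \<in> {x..R}"
      from reachable_min_le_level_cost_combination[OF f xy t this s\<^sub>2] t'
      show "(reachable_min f p ?r - t * level_cost f p s\<^sub>2) / (1 - t) \<le> level_cost f p s\<^sub>1"
        by (simp add: divide_le_eq algebra_simps)
    qed
    thus ?thesis using t' by (simp add: divide_le_eq algebra_simps)
  qed
  hence "(reachable_min f p ?r - (1 - t) * reachable_min f p x) / t \<le> reachable_min f p y"
    unfolding reachable_min_def[of f p y] using xy t'
    by (intro cINF_greatest) (auto simp: divide_le_eq algebra_simps)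
  thus ?thesis using t' by (simp add: divide_le_eq algebra_simps)
qed auto

lemma bellman_min_convex:
  assumes f: "admissible f"
  shows "convex_in_level (bellman_min c f)"
  unfolding convex_in_level_iff
proof (intro allI ballI impI)
  fix p x y t :: real assume xy: "x \<in> {0..R}" "y \<in> {0..R}" and t: "0 \<le> t \<and> t \<le> 1"
  have f': "lin_growth f" "convex_in_level f" using f by (auto simp: admissible_def)
  have r: "(1 - t) * x + t * y \<in> {0..R}" using xy t by (intro convex_combination_in_level) auto
  show "bellman_min c f ((1 - t) * x + t * y) p \<le> (1 - t) * bellman_min c f x p + t * bellman_min c f y p"
    using reachable_min_convex[OF f' xy, of t p] t
    unfolding bellman_min_eq[OF f'(1) r] bellman_min_eq[OF f'(1) xy(1)] bellman_min_eq[OF f'(1) xy(2)]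
    by (simp add: algebra_simps)
qed

lemma admissible_bellman_min: "admissible f \<Longrightarrow> admissible (bellman_min c f)"
  using bellman_min_lin_growth bellman_min_lipschitz bellman_min_convex
    bellman_min_mono_in_price bellman_min_mono_increments
  by (simp add: admissible_def)

definition shortage_cost :: "real \<Rightarrow> real \<Rightarrow> (real \<Rightarrow> real) \<Rightarrow> real \<Rightarrow> real \<Rightarrow> real" where
  "shortage_cost pf hh c r p = pf * (R - r) * (1 + hh * (R - r) + c p)"

lemma shortage_cost_diff:
  "shortage_cost pf hh c r\<^sub>1 p - shortage_cost pf hh c r\<^sub>2 p
    = pf * (r\<^sub>2 - r\<^sub>1) * (1 + c p) + pf * hh * (r\<^sub>2 - r\<^sub>1) * (2 * R - r\<^sub>1 - r\<^sub>2)"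
  unfolding shortage_cost_def by (simp add: algebra_simps)

context
  fixes pf hh a b :: real and c :: "real \<Rightarrow> real"
  assumes pf: "0 \<le> pf" and hh: "0 \<le> hh" and ab: "0 \<le> a" "0 \<le> b"
    and c_growth: "\<And>p. \<bar>c p\<bar> \<le> a + b * \<bar>p\<bar>" and c_mono: "mono c"
begin

lemma shortage_cost_lin_growth: "lin_growth (shortage_cost pf hh c)"
proof -
  have "\<bar>shortage_cost pf hh c r p\<bar> \<le> pf * R * (1 + hh * R + a) + (pf * R * b) * \<bar>p\<bar>"
    if r: "r \<in> {0..R}" for r p
  proof -
    have "0 \<le> hh * (R - r)" "hh * (R - r) \<le> hh * R" using r hh by (auto intro: mult_left_mono)
    hence "\<bar>1 + hh * (R - r) + c p\<bar> \<le> 1 + hh * R + (a + b * \<bar>p\<bar>)" using c_growth[of p] by linarith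
    moreover have "\<bar>pf * (R - r)\<bar> \<le> pf * R" using r pf by (auto intro: mult_left_mono)
    ultimately have "\<bar>pf * (R - r)\<bar> * \<bar>1 + hh * (R - r) + c p\<bar> \<le> pf * R * (1 + hh * R + (a + b * \<bar>p\<bar>))"
      by (intro mult_mono) auto
    thus ?thesis unfolding shortage_cost_def abs_mult[symmetric] by (simp add: algebra_simps)
  qed
  thus ?thesis
    unfolding lin_growth_def using pf hh ab R_pos
    by (intro exI[of _ "pf * R * (1 + hh * R + a)"] exI[of _ "pf * R * b"]) auto
qed

lemma shortage_cost_lipschitz: "lipschitz_in_level (shortage_cost pf hh c)"
proof -
  have "\<bar>shortage_cost pf hh c r\<^sub>1 p - shortage_cost pf hh c r\<^sub>2 p\<bar>
      \<le> (pf * (1 + a + 2 * hh * R) + (pf * b) * \<bar>p\<bar>) * \<bar>r\<^sub>1 - r\<^sub>2\<bar>"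
    if r: "r\<^sub>1 \<in> {0..R}" "r\<^sub>2 \<in> {0..R}" for r\<^sub>1 r\<^sub>2 p
  proof -
    have t\<^sub>1: "\<bar>pf * (r\<^sub>2 - r\<^sub>1) * (1 + c p)\<bar> \<le> pf * (1 + a + b * \<bar>p\<bar>) * \<bar>r\<^sub>1 - r\<^sub>2\<bar>"
    proof -
      have "\<bar>1 + c p\<bar> \<le> 1 + a + b * \<bar>p\<bar>" using c_growth[of p] by linarith
      have "\<bar>pf * (r\<^sub>2 - r\<^sub>1) * (1 + c p)\<bar> = pf * \<bar>1 + c p\<bar> * \<bar>r\<^sub>1 - r\<^sub>2\<bar>"
        using pf by (simp add: abs_mult abs_minus_commute mult_ac)
      also have "\<dots> \<le> pf * (1 + a + b * \<bar>p\<bar>) * \<bar>r\<^sub>1 - r\<^sub>2\<bar>"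
        using pf \<open>\<bar>1 + c p\<bar> \<le> _\<close> by (intro mult_right_mono mult_left_mono) auto
      finally show ?thesis .
    qed
    have t\<^sub>2: "\<bar>pf * hh * (r\<^sub>2 - r\<^sub>1) * (2 * R - r\<^sub>1 - r\<^sub>2)\<bar> \<le> pf * hh * (2 * R) * \<bar>r\<^sub>1 - r\<^sub>2\<bar>"
    proof -
      have "\<bar>2 * R - r\<^sub>1 - r\<^sub>2\<bar> \<le> 2 * R" using r by auto
      have "\<bar>pf * hh * (r\<^sub>2 - r\<^sub>1) * (2 * R - r\<^sub>1 - r\<^sub>2)\<bar> = pf * hh * \<bar>r\<^sub>1 - r\<^sub>2\<bar> * \<bar>2 * R - r\<^sub>1 - r\<^sub>2\<bar>"
        by (simp only: abs_mult abs_of_nonneg[OF pf] abs_of_nonneg[OF hh] abs_minus_commute[of r\<^sub>2 r\<^sub>1])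
      also have "\<dots> \<le> pf * hh * \<bar>r\<^sub>1 - r\<^sub>2\<bar> * (2 * R)"
        using pf hh \<open>\<bar>2 * R - r\<^sub>1 - r\<^sub>2\<bar> \<le> 2 * R\<close> by (intro mult_left_mono) auto
      finally show ?thesis by (simp add: mult_ac)
    qed
    have "\<bar>shortage_cost pf hh c r\<^sub>1 p - shortage_cost pf hh c r\<^sub>2 p\<bar>
        \<le> \<bar>pf * (r\<^sub>2 - r\<^sub>1) * (1 + c p)\<bar> + \<bar>pf * hh * (r\<^sub>2 - r\<^sub>1) * (2 * R - r\<^sub>1 - r\<^sub>2)\<bar>"
      unfolding shortage_cost_diff by (rule abs_triangle_ineq)
    also have "\<dots> \<le> pf * (1 + a + b * \<bar>p\<bar>) * \<bar>r\<^sub>1 - r\<^sub>2\<bar> + pf * hh * (2 * R) * \<bar>r\<^sub>1 - r\<^sub>2\<bar>"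
      using t\<^sub>1 t\<^sub>2 by (rule add_mono)
    finally show ?thesis by (simp add: algebra_simps)
  qed
  thus ?thesis
    unfolding lipschitz_in_level_iff using pf hh ab R_pos
    by (intro exI[of _ "pf * (1 + a + 2 * hh * R)"] exI[of _ "pf * b"]) auto
qed

lemma shortage_cost_convex: "convex_in_level (shortage_cost pf hh c)"
  unfolding convex_in_level_iff
proof (intro allI ballI impI)
  fix p x y t :: real assume t: "0 \<le> t \<and> t \<le> 1"
  have lin: "R - ((1 - t) * x + t * y) = (1 - t) * (R - x) + t * (R - y)" by (simp add: algebra_simps)
  have "((1 - t) * (R - x) + t * (R - y))\<^sup>2 \<le> (1 - t) * (R - x)\<^sup>2 + t * (R - y)\<^sup>2"
  proof -
    have "(1 - t) * (R - x)\<^sup>2 + t * (R - y)\<^sup>2 - ((1 - t) * (R - x) + t * (R - y))\<^sup>2 = t * (1 - t) * (x - y)\<^sup>2"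
      by (simp add: power2_eq_square algebra_simps)
    moreover have "0 \<le> t * (1 - t) * (x - y)\<^sup>2" using t by simp
    ultimately show ?thesis by linarith
  qed
  hence "pf * hh * (R - ((1 - t) * x + t * y))\<^sup>2 \<le> pf * hh * ((1 - t) * (R - x)\<^sup>2 + t * (R - y)\<^sup>2)"
    unfolding lin using pf hh by (intro mult_left_mono) auto
  moreover have split: "shortage_cost pf hh c r p = pf * (R - r) * (1 + c p) + pf * hh * (R - r)\<^sup>2" for r
    unfolding shortage_cost_def by (simp add: power2_eq_square algebra_simps)
  moreover have "pf * (R - ((1 - t) * x + t * y)) * (1 + c p)
      = (1 - t) * (pf * (R - x) * (1 + c p)) + t * (pf * (R - y) * (1 + c p))"
    by (simp add: algebra_simps)
  ultimately show "shortage_cost pf hh c ((1 - t) * x + t * y) p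
      \<le> (1 - t) * shortage_cost pf hh c x p + t * shortage_cost pf hh c y p"
    unfolding split by (simp add: algebra_simps)
qed

lemma shortage_cost_mono_in_price: "mono_in_price (shortage_cost pf hh c)"
  unfolding mono_in_price_def
proof (intro ballI monoI)
  fix r p q :: real assume "r \<in> {0..R}" "p \<le> q"
  moreover from c_mono \<open>p \<le> q\<close> have "c p \<le> c q" by (rule monoD)
  ultimately show "shortage_cost pf hh c r p \<le> shortage_cost pf hh c r q"
    unfolding shortage_cost_def using pf by (intro mult_left_mono) auto
qed

lemma shortage_cost_mono_increments: "mono_increments (shortage_cost pf hh c)"
  unfolding mono_increments_def
proof (intro ballI impI monoI)
  fix r\<^sub>1 r\<^sub>2 p q :: real assume "r\<^sub>1 \<le> r\<^sub>2" "p \<le> q"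
  moreover from c_mono \<open>p \<le> q\<close> have "c p \<le> c q" by (rule monoD)
  ultimately have "pf * (r\<^sub>2 - r\<^sub>1) * (1 + c p) \<le> pf * (r\<^sub>2 - r\<^sub>1) * (1 + c q)"
    using pf by (intro mult_left_mono) auto
  thus "shortage_cost pf hh c r\<^sub>1 p - shortage_cost pf hh c r\<^sub>2 p
      \<le> shortage_cost pf hh c r\<^sub>1 q - shortage_cost pf hh c r\<^sub>2 q"
    unfolding shortage_cost_diff by simp
qed

lemma admissible_shortage_cost: "admissible (shortage_cost pf hh c)"
  using shortage_cost_lin_growth shortage_cost_lipschitz shortage_cost_convex
    shortage_cost_mono_in_price shortage_cost_mono_increments
  by (simp add: admissible_def)

end

lemma shortage_cost_slopes_ge:
  assumes "\<And>p. c p \<le> c' p" "0 \<le> pf"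
  shows "slopes_ge (shortage_cost pf hh c) (shortage_cost pf hh c')"
  unfolding slopes_ge_def shortage_cost_diff using assms by (auto intro: mult_left_mono)

definition terminal_cost :: "real \<times> real \<Rightarrow> (real \<Rightarrow> real) \<Rightarrow> real \<Rightarrow> real \<Rightarrow> real \<Rightarrow> real \<Rightarrow> real \<Rightarrow> real"
  where "terminal_cost b g hh pf cc r p = rho b N (\<lambda>z. (1 + hh * (R - r) + g (p * e + cc + z)) * (R - r) * pf)"

definition compensation_risk :: "real \<times> real \<Rightarrow> (real \<Rightarrow> real) \<Rightarrow> real \<Rightarrow> real \<Rightarrow> real" where
  "compensation_risk b g cc p = rho_spectral b (\<lambda>z. g (p * e + cc + z))"

context
  fixes g :: "real \<Rightarrow> real" and A L :: real
  assumes g_mono: "mono g" and g_growth: "\<And>y. \<bar>g y\<bar> \<le> A + L * \<bar>y\<bar>" and L: "0 \<le> L"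
begin

lemma integrable_compensation: "integrable N (\<lambda>z. g (c + z))"
  by (rule integrable_shift_of_growth[OF borel_measurable_mono[OF g_mono] g_growth L])

lemma mono_compensation: "mono (\<lambda>z. g (c + z))"
  using g_mono by (simp add: mono_def)

lemma terminal_cost_eq:
  assumes b: "valid_risk_level b" and pf: "0 \<le> pf" and r: "r \<in> {0..R}"
  shows "terminal_cost b g hh pf cc r p = shortage_cost pf hh (compensation_risk b g cc) r p"
proof -
  define k\<^sub>1 where "k\<^sub>1 = (1 + hh * (R - r)) * (R - r) * pf"
  define k\<^sub>2 where "k\<^sub>2 = (R - r) * pf"
  have k\<^sub>2: "0 \<le> k\<^sub>2" using r pf by (simp add: k\<^sub>2_def)
  have ig: "integrable N (\<lambda>z. g (p * e + cc + z))" by (rule integrable_compensation)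
  have "(\<lambda>z. (1 + hh * (R - r) + g (p * e + cc + z)) * (R - r) * pf) = (\<lambda>z. k\<^sub>1 + k\<^sub>2 * g (p * e + cc + z))"
    unfolding k\<^sub>1_def k\<^sub>2_def by (auto simp: algebra_simps)
  moreover have "mono (\<lambda>z. k\<^sub>1 + k\<^sub>2 * g (p * e + cc + z))"
    using mono_compensation k\<^sub>2 by (auto simp: mono_def intro: mult_left_mono)
  moreover have "integrable N (\<lambda>z. k\<^sub>1 + k\<^sub>2 * g (p * e + cc + z))"
    using ig by (intro Bochner_Integration.integrable_add integrable_const integrable_mult_right)
  ultimately have "terminal_cost b g hh pf cc r p = rho_spectral b (\<lambda>z. k\<^sub>1 + k\<^sub>2 * g (p * e + cc + z))"
    unfolding terminal_cost_def by (simp add: rho_eq_rho_spectral[OF b])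
  also have "\<dots> = k\<^sub>1 + k\<^sub>2 * compensation_risk b g cc p"
    unfolding compensation_risk_def
    using rho_spectral_add[OF integrable_const integrable_mult_right[OF ig]] rho_spectral_cmult rho_spectral_const[OF b]
    by simp
  finally show ?thesis unfolding k\<^sub>1_def k\<^sub>2_def shortage_cost_def by (simp add: algebra_simps)
qed

lemma compensation_risk_mono:
  assumes b: "valid_risk_level b"
  shows "mono (compensation_risk b g cc)"
proof (rule monoI)
  fix p q :: real assume pq: "p \<le> q"
  show "compensation_risk b g cc p \<le> compensation_risk b g cc q"
    unfolding compensation_risk_def
  proof (rule rho_spectral_mono[OF b integrable_compensation integrable_compensation])
    have "p * e + cc + z \<le> q * e + cc + z" for z using pq e_pos by (simp add: mult_right_mono)
    thus "g (p * e + cc + z) \<le> g (q * e + cc + z)" for z using g_mono by (auto simp: mono_def)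
  qed
qed

lemma compensation_risk_mono_risk_aversion:
  assumes b: "valid_risk_level b" "valid_risk_level b'" and le: "fst b \<le> fst b'" "snd b \<le> snd b'"
  shows "compensation_risk b g cc p \<le> compensation_risk b' g cc p"
  unfolding compensation_risk_def
  using rho_eq_rho_spectral[OF b(1) mono_compensation integrable_compensation]
    rho_eq_rho_spectral[OF b(2) mono_compensation integrable_compensation]
    rho_mono_risk_aversion[OF integrable_compensation b le]
  by simp

lemma compensation_risk_growth:
  assumes b: "valid_risk_level b" and A: "0 \<le> A"
  obtains a\<^sub>0 b\<^sub>0 where "0 \<le> a\<^sub>0" "0 \<le> b\<^sub>0" "\<And>p. \<bar>compensation_risk b g cc p\<bar> \<le> a\<^sub>0 + b\<^sub>0 * \<bar>p\<bar>"
proof -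
  obtain A' B where AB: "0 \<le> A'" "0 \<le> B" "\<And>h c. integrable N (\<lambda>z. h (c + z)) \<Longrightarrow>
      (\<And>y. \<bar>h y\<bar> \<le> A + L * \<bar>y\<bar>) \<Longrightarrow> \<bar>rho_spectral b (\<lambda>z. h (c + z))\<bar> \<le> A' + B * \<bar>c\<bar>"
    using rho_spectral_shift_growth[OF b A L] by blast
  have "\<bar>compensation_risk b g cc p\<bar> \<le> (A' + B * \<bar>cc\<bar>) + (B * e) * \<bar>p\<bar>" for p
  proof -
    have "\<bar>compensation_risk b g cc p\<bar> \<le> A' + B * \<bar>p * e + cc\<bar>"
      unfolding compensation_risk_def by (rule AB(3)[OF integrable_compensation g_growth])
    also have "\<dots> \<le> A' + B * (e * \<bar>p\<bar> + \<bar>cc\<bar>)" using AB(2) abs_affine_le by (simp add: mult_left_mono)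
    finally show ?thesis by (simp add: algebra_simps)
  qed
  thus ?thesis using that AB(1,2) e_pos by (meson add_nonneg_nonneg abs_ge_zero mult_nonneg_nonneg less_imp_le)
qed

end

end

section \<open>The charging model\<close>

locale ev_model =
  fixes m :: evm
  assumes valid: "valid_evm m" and compensation: "assumption1 m" and fast_charging: "Rmax m \<le> xmax m"

sublocale ev_model \<subseteq> charging_dp "noise m" "Rmax m" "exp (- kY m)" "xmax m"
proof (intro charging_dp.intro integrable_real_distribution.intro charging_dp_axioms.intro
    integrable_real_distribution_axioms.intro)
  show "real_distribution (noise m)" "integrable (noise m) (\<lambda>z. z)"
    by (fact noise_real_distribution[OF valid])+
  show "0 < Rmax m" using valid by (simp add: valid_evm_def)
qed (simp_all add: fast_charging)

context ev_model
begin

lemma shortage_eq: "shortage m r = Rmax m - r"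
proof -
  have "1 * xmax m \<le> real (Th m) * xmax m"
    using valid by (intro mult_right_mono) (auto simp: valid_evm_def)
  hence "Rmax m \<le> R0 m + real (Th m) * xmax m"
    using valid fast_charging unfolding valid_evm_def by linarith
  thus ?thesis unfolding shortage_def by simp
qed

lemma compensation_growth:
  obtains L where "0 \<le> L" "\<And>y. \<bar>gY m y\<bar> \<le> \<bar>gY m 0\<bar> + L * \<bar>y\<bar>"
proof -
  obtain L where L: "\<And>x y. \<bar>gY m x - gY m y\<bar> \<le> L * \<bar>x - y\<bar>"
    using compensation unfolding assumption1_def by blast
  have "\<bar>gY m y\<bar> \<le> \<bar>gY m 0\<bar> + max L 0 * \<bar>y\<bar>" for y
  proof -
    have "\<bar>gY m y - gY m 0\<bar> \<le> max L 0 * \<bar>y\<bar>"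
      using L[of y 0] mult_right_mono[of L "max L 0" "\<bar>y\<bar>"] by simp
    thus ?thesis by linarith
  qed
  thus ?thesis using that[of "max L 0"] by simp
qed

lemma compensation_mono: "mono (gY m)"
  using compensation strict_mono_mono unfolding assumption1_def by blast

abbreviation terminal_shift :: real where
  "terminal_shift \<equiv> shift m (Th m) - gs m (real (Th m) + 1)"

lemma Vb_0: "Vb m \<beta> 0 = terminal_cost (\<beta> (Th m)) (gY m) (gh m) (pref m) terminal_shift"
  by (intro ext) (simp add: terminal_cost_def shortage_eq)

lemma Vb_Suc:
  "Vb m \<beta> (Suc n) = bellman_min (cf m) (post_decision (\<beta> (Th m - Suc n)) (shift m (Th m - Suc n)) (Vb m \<beta> n))"
  by (intro ext) (simp add: bellman_min_def post_decision_def Xset_def)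

lemma Vt_eq_post_decision: "Vt m \<beta> t = post_decision (\<beta> t) (shift m t) (Vb m \<beta> (Th m - (t + 1)))"
  by (intro ext) (simp add: Vt_def V_def post_decision_def)

lemma admissible_terminal_cost:
  assumes b: "valid_risk_level b"
  shows "admissible (terminal_cost b (gY m) (gh m) (pref m) cc)"
proof -
  obtain L where L: "0 \<le> L" "\<And>y. \<bar>gY m y\<bar> \<le> \<bar>gY m 0\<bar> + L * \<bar>y\<bar>"
    using compensation_growth by blast
  have pf: "0 \<le> pref m" and hh: "0 \<le> gh m" using valid by (auto simp: valid_evm_def)
  obtain a\<^sub>0 b\<^sub>0 where growth: "0 \<le> a\<^sub>0" "0 \<le> b\<^sub>0" "\<And>p. \<bar>compensation_risk b (gY m) cc p\<bar> \<le> a\<^sub>0 + b\<^sub>0 * \<bar>p\<bar>"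
    by (rule compensation_risk_growth[OF compensation_mono L(2,1) b abs_ge_zero, where cc = cc]) blast
  have eq: "shortage_cost (pref m) (gh m) (compensation_risk b (gY m) cc) r p
      = terminal_cost b (gY m) (gh m) (pref m) cc r p" if "r \<in> {0..Rmax m}" for r p
    by (rule terminal_cost_eq[OF compensation_mono L(2,1) b pf that, symmetric])
  show ?thesis
    by (rule admissible_cong[OF eq admissible_shortage_cost[OF pf hh growth
          compensation_risk_mono[OF compensation_mono L(2,1) b]]])
qed

lemma terminal_cost_slopes_ge:
  assumes b: "valid_risk_level b" "valid_risk_level b'" and le: "fst b \<le> fst b'" "snd b \<le> snd b'"
  shows "slopes_ge (terminal_cost b (gY m) (gh m) (pref m) cc) (terminal_cost b' (gY m) (gh m) (pref m) cc)"
proof -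
  obtain L where L: "0 \<le> L" "\<And>y. \<bar>gY m y\<bar> \<le> \<bar>gY m 0\<bar> + L * \<bar>y\<bar>"
    using compensation_growth by blast
  have pf: "0 \<le> pref m" using valid by (simp add: valid_evm_def)
  have slopes: "slopes_ge (shortage_cost (pref m) (gh m) (compensation_risk b (gY m) cc))
      (shortage_cost (pref m) (gh m) (compensation_risk b' (gY m) cc))"
    using compensation_risk_mono_risk_aversion[OF compensation_mono L(2,1) b le] pf
    by (rule shortage_cost_slopes_ge)
  have eq: "shortage_cost (pref m) (gh m) (compensation_risk b'' (gY m) cc) r p
      = terminal_cost b'' (gY m) (gh m) (pref m) cc r p"
    if "valid_risk_level b''" "r \<in> {0..Rmax m}" for b'' r p
    by (rule terminal_cost_eq[OF compensation_mono L(2,1) that(1) pf that(2), symmetric])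
  show ?thesis by (rule slopes_ge_cong[OF eq[OF b(1)] eq[OF b(2)] slopes])
qed

lemma thresh_least_minimizer:
  assumes "admissible (Vt m \<beta> t)"
  shows "is_least_minimizer {0..Rmax m} (level_cost (Vt m \<beta> t) p) (thresh m \<beta> t p)"
proof -
  have "thresh m \<beta> t p = (THE r. is_least_minimizer {0..Rmax m} (level_cost (Vt m \<beta> t) p) r)"
    unfolding thresh_def is_least_minimizer_def level_cost_def ..
  thus ?thesis
    using least_minimizer_The[OF compact_Icc _ continuous_on_level_cost[OF assms]] R_pos by simp
qed

context
  fixes \<beta> \<beta>' :: "nat \<Rightarrow> real \<times> real"
  assumes valid_\<beta>: "\<And>t. t \<le> Th m \<Longrightarrow> valid_risk_level (\<beta> t) \<and> valid_risk_level (\<beta>' t)"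
    and \<beta>_le: "\<And>t. t \<le> Th m \<Longrightarrow> fst (\<beta> t) \<le> fst (\<beta>' t) \<and> snd (\<beta> t) \<le> snd (\<beta>' t)"
begin

lemma Vb_admissible_slopes_ge:
  "admissible (Vb m \<beta> n) \<and> admissible (Vb m \<beta>' n) \<and> slopes_ge (Vb m \<beta> n) (Vb m \<beta>' n)"
proof (induction n)
  case 0
  show ?case
    unfolding Vb_0 using valid_\<beta>[of "Th m"] \<beta>_le[of "Th m"]
    by (auto intro: admissible_terminal_cost terminal_cost_slopes_ge)
next
  case (Suc n)
  have "Th m - Suc n \<le> Th m" by simp
  thus ?case
    unfolding Vb_Suc using Suc.IH valid_\<beta> \<beta>_le
    by (intro conjI admissible_bellman_min admissible_post_decision bellman_min_slopes_ge post_decision_slopes_ge)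
      auto
qed

lemma Vt_admissible_slopes_ge:
  assumes "t < Th m"
  shows "admissible (Vt m \<beta> t) \<and> admissible (Vt m \<beta>' t) \<and> slopes_ge (Vt m \<beta> t) (Vt m \<beta>' t)"
  unfolding Vt_eq_post_decision using Vb_admissible_slopes_ge valid_\<beta>[of t] \<beta>_le[of t] assms
  by (intro conjI admissible_post_decision post_decision_slopes_ge) auto

lemma Vt_deriv_ge:
  assumes "t < Th m" "0 < r" "r < Rmax m"
    and "((\<lambda>s. Vt m \<beta> t s p) has_real_derivative D) (at r)"
    and "((\<lambda>s. Vt m \<beta>' t s p) has_real_derivative D') (at r)"
  shows "D' \<le> D"
proof -
  have "D' - D \<le> 0"
  proof (rule DERIV_nonpos_of_nonincreasing_right[OF \<open>r < Rmax m\<close> _ DERIV_diff[OF assms(5,4)]])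
    fix h assume "0 < h" "r + h < Rmax m"
    hence "r \<in> {0..Rmax m}" "r + h \<in> {0..Rmax m}" "r \<le> r + h" using \<open>0 < r\<close> by auto
    with Vt_admissible_slopes_ge[OF assms(1)]
    have "Vt m \<beta> t r p - Vt m \<beta> t (r + h) p \<le> Vt m \<beta>' t r p - Vt m \<beta>' t (r + h) p"
      unfolding slopes_ge_def by blast
    thus "Vt m \<beta>' t (r + h) p - Vt m \<beta> t (r + h) p \<le> Vt m \<beta>' t r p - Vt m \<beta> t r p" by simp
  qed
  thus ?thesis by simp
qed

lemma thresh_mono: "t < Th m \<Longrightarrow> thresh m \<beta> t p \<le> thresh m \<beta>' t p"
  using least_minimizer_mono[OF thresh_least_minimizer thresh_least_minimizer] Vt_admissible_slopes_ge
  by (auto simp: slopes_ge_def level_cost_def)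

end

end

theorem mainTheorem12:
  fixes m :: evm and \<beta> \<beta>' :: "nat \<Rightarrow> real \<times> real"
  assumes "valid_evm m" and "assumption1 m" and "xmax m \<ge> Rmax m"
    and "valid_beta m \<beta>" and "valid_beta m \<beta>'"
    and "\<forall>t \<le> Th m. fst (\<beta> t) \<le> fst (\<beta>' t) \<and> snd (\<beta> t) \<le> snd (\<beta>' t)"
  shows "(\<forall>t < Th m. \<forall>p r D D'. 0 < r \<and> r < Rmax m
            \<and> ((\<lambda>s. Vt m \<beta> t s p) has_real_derivative D) (at r)
            \<and> ((\<lambda>s. Vt m \<beta>' t s p) has_real_derivative D') (at r) \<longrightarrow> D \<ge> D')
       \<and> (\<forall>t < Th m. \<forall>p. thresh m \<beta> t p \<le> thresh m \<beta>' t p)"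
proof -
  interpret ev_model m using assms(1-3) by unfold_locales auto
  have valid: "valid_risk_level (\<beta> t) \<and> valid_risk_level (\<beta>' t)" if "t \<le> Th m" for t
    using assms(4,5) that unfolding valid_beta_def valid_risk_level_def by blast
  have le: "fst (\<beta> t) \<le> fst (\<beta>' t) \<and> snd (\<beta> t) \<le> snd (\<beta>' t)" if "t \<le> Th m" for t
    using assms(6) that by blast
  show ?thesis using Vt_deriv_ge[OF valid le] thresh_mono[OF valid le] by auto
qed

end
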